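(* Suppose $\{X_i:i\in\mathcal I_n\}$ satisfies Assumption 2, $H$ is a degenerate symmetric kernel, and $\delta>0$. Let $J\ge1$ and $\mathbf i=(i_1,k_1,\dots,i_J,k_J)\in\mathcal I_n^{2J}$ with $i_j\ne k_j$ for each $j$. If $\mathbf i$ has an $m$-free index, then $$\Big|E\Big[\prod_{j=1}^JH_{i_jk_j}\Big]\Big|\le 2\,\mathbf H_{J+\delta}^J\,\beta(1,2J-1,m)^{\frac{\delta}{J+\delta}}.$$
   Context: $\mathcal I_n$ is a finite index set with metric $\mathbf d$; $\{X_i\}$ are random vectors in $\mathbb R^d$. $\beta(\mathcal F_1,\mathcal F_2)=\sup\frac12\sum_i\sum_j|P(A_i\cap B_j)-P(A_i)P(B_j)|$ over finite partitions $\{A_i\}\subset\mathcal F_1,\{B_j\}\subset\mathcal F_2$. Assumption 2: for all $n_1,n_2\in\mathbb N\cup\{\infty\}$, $m>0$, $\sup\beta(\sigma(X_i:i\in\mathcal I_1),\sigma(X_i:i\in\mathcal I_2))\le\beta(n_1,n_2,m)$, sup over $\mathcal I_1,\mathcal I_2\subset\mathcal I_n$ with $|\mathcal I_1|\le n_1,|\mathcal I_2|\le n_2$, $\mathbf d(\mathcal I_1,\mathcal I_2)=\min_{i\in\mathcal I_1,j\in\mathcal I_2}\mathbf d(i,j)\ge m$. Degenerate: $EH(X_k,x)=0$ for all $k$ and $x$. $H_{ij}=H(X_i,X_j)$; for $i\ne j$, $\tilde X_j$ has the law of $X_j$ and is independent of $X_i$, $H_{i\tilde j}=H(X_i,\tilde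 X_j)$; $\mathbf H_p=\sup_{i\ne j}\max\{\|H_{ij}\|_p,\|H_{i\tilde j}\|_p\}$. An entry $i_k$ of $\mathbf i=(i_1,\dots,i_q)$ is $m$-free if $\mathbf d(i_k,i_l)>m$ for every other entry $i_l$, $l\ne k$. *)

theory Defs
  imports "HOL-Probability.Probability"
begin

definition is_fin_partition :: "'w set \<Rightarrow> 'w set set \<Rightarrow> 'w set set \<Rightarrow> bool" where
  "is_fin_partition \<Omega> F P \<longleftrightarrow> finite P \<and> P \<subseteq> F \<and> disjoint P \<and> \<Union>P = \<Omega>"

definition beta_coef :: "'w measure \<Rightarrow> 'w set set \<Rightarrow> 'w set set \<Rightarrow> real" where
  "beta_coef M F1 F2 =
     (SUP AB \<in> {(A, B). is_fin_partition (space M) F1 A \<and> is_fin_partition (space M) F2 B}.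
        (1/2) * (\<Sum>a\<in>fst AB. \<Sum>b\<in>snd AB.
                   \<bar>measure M (a \<inter> b) - measure M a * measure M b\<bar>))"

definition gen_sigma :: "'w measure \<Rightarrow> ('i \<Rightarrow> 'w \<Rightarrow> 'b::topological_space) \<Rightarrow> 'i set \<Rightarrow> 'w set set" where
  "gen_sigma M X I = sigma_sets (space M) (\<Union>i\<in>I. {X i -` A \<inter> space M | A. A \<in> sets borel})"

definition Lp_norm :: "'a measure \<Rightarrow> ('a \<Rightarrow> real) \<Rightarrow> real \<Rightarrow> real" where
  "Lp_norm N f p = (\<integral>x. \<bar>f x\<bar> powr p \<partial>N) powr (1 / p)"

text \<open>H_p = sup over i ~= j of max(||H(X_i,X_j)||_p, ||H(X_i, X~_j)||_p), where X~_j is an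
  independent copy of X_j, i.e. (X_i, X~_j) has law P_{X_i} x P_{X_j}.\<close>
definition Hbound :: "'w measure \<Rightarrow> ('i \<Rightarrow> 'w \<Rightarrow> 'b::topological_space) \<Rightarrow> ('b \<Rightarrow> 'b \<Rightarrow> real)
                       \<Rightarrow> 'i set \<Rightarrow> real \<Rightarrow> real" where
  "Hbound M X H I p =
     (SUP ij \<in> {(i, j). i \<in> I \<and> j \<in> I \<and> i \<noteq> j}.
        max (Lp_norm M (\<lambda>\<omega>. H (X (fst ij) \<omega>) (X (snd ij) \<omega>)) p)
            (Lp_norm (distr M borel (X (fst ij)) \<Otimes>\<^sub>M distr M borel (X (snd ij)))
                     (\<lambda>xy. H (fst xy) (snd xy)) p))"

end

theory Submission
  imports Defs
begin

text \<open>
  Let \<open>s\<close> be the \<open>m\<close>-free index and compare two laws on the product of \<open>\<sigma>(X s)\<close> and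
  \<open>\<sigma>(X i : i \<noteq> s)\<close>: the law \<open>Pdiag\<close> of \<open>(\<omega>, \<omega>)\<close> and the product \<open>Qprod\<close> of the two
  restrictions of the underlying measure. On a finite union of rectangles, refined into the cells of
  two finite partitions, \<open>Pdiag - Qprod\<close> is at most the \<open>\<beta>\<close>-coefficient; approximation by such
  unions extends this to every measurable set. Writing both laws through their densities \<open>p, q\<close>
  with respect to \<open>Pdiag + Qprod\<close>, Hoelder's inequality with weight \<open>|p - q|\<close> turns the setwise
  bound into \<open>|\<integral>f dPdiag - \<integral>f dQprod| \<le> 2 V powr (1/r) \<beta> powr (1 - 1/r)\<close> with
  \<open>r = (J + \<delta>)/J\<close>; by the arithmetic-geometric mean inequality the \<open>r\<close>-th moment of the
  product of \<open>J\<close> kernels is at most \<open>V = Hbound powr (J + \<delta>)\<close>. Finally, under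
  \<open>Qprod\<close> the copy of \<open>X s\<close> is independent of all other variables, so degeneracy of \<open>H\<close>
  makes \<open>\<integral>f dQprod\<close> vanish.
\<close>

section \<open>Elementary inequalities\<close>

lemma Young_inequality_weighted:
  fixes g w A B r :: real
  assumes "g \<ge> 0" "w \<ge> 0" "A > 0" "B > 0" "r > 1"
  shows "g * w \<le> A powr (1/r) * B powr (1 - 1/r) *
           ((1/r) * (g powr r * w / A) + (1 - 1/r) * (w / B))"
proof (cases "g = 0 \<or> w = 0")
  case True
  have "0 \<le> A powr (1/r) * B powr (1 - 1/r) *
           ((1/r) * (g powr r * w / A) + (1 - 1/r) * (w / B))"
    using assms by (intro mult_nonneg_nonneg add_nonneg_nonneg) (auto simp: field_simps)
  then show ?thesis using True by auto
next
  case False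
  then have "g > 0" "w > 0" using assms by auto
  have "(g powr r * w / A) powr (1/r) * (w / B) powr (1 - 1/r)
      \<le> (1/r) * (g powr r * w / A) + (1 - 1/r) * (w / B)"
    using assms \<open>g > 0\<close> \<open>w > 0\<close> by (intro Youngs_inequality_0) (auto simp: field_simps)
  moreover have "(g powr r * w / A) powr (1/r) * (w / B) powr (1 - 1/r)
      = g * (w powr (1/r) * w powr (1 - 1/r)) / (A powr (1/r) * B powr (1 - 1/r))"
    using assms \<open>g > 0\<close> \<open>w > 0\<close> by (simp add: powr_divide powr_mult powr_powr field_simps)
  moreover have "w powr (1/r) * w powr (1 - 1/r) = w"
    using \<open>w > 0\<close> by (simp add: powr_add[symmetric])
  moreover have "A powr (1/r) * B powr (1 - 1/r) > 0" using assms by simp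
  ultimately show ?thesis by (simp add: divide_le_eq mult.commute)
qed

lemma Holder_inequality_weighted:
  fixes g w :: "'a \<Rightarrow> real"
  assumes [measurable]: "g \<in> borel_measurable N" "w \<in> borel_measurable N"
    and g0: "\<And>x. g x \<ge> 0" and w0: "\<And>x. w x \<ge> 0"
    and int_gw_r: "integrable N (\<lambda>x. g x powr r * w x)" and int_w: "integrable N w"
    and int_gw: "integrable N (\<lambda>x. g x * w x)" and r: "r > 1"
  shows "(\<integral>x. g x * w x \<partial>N)
           \<le> (\<integral>x. g x powr r * w x \<partial>N) powr (1/r) * (\<integral>x. w x \<partial>N) powr (1 - 1/r)"
proof -
  define A where "A = (\<integral>x. g x powr r * w x \<partial>N)"
  define B where "B = (\<integral>x. w x \<partial>N)"
  have "A \<ge> 0" unfolding A_def using g0 w0 by (intro integral_nonneg_AE) auto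
  have "B \<ge> 0" unfolding B_def using w0 by (intro integral_nonneg_AE) auto
  show ?thesis
  proof (cases "A = 0 \<or> B = 0")
    case True
    have "AE x in N. g x * w x = 0"
    proof (cases "A = 0")
      case True
      then have "AE x in N. g x powr r * w x = 0"
        using int_gw_r g0 w0 unfolding A_def by (subst integral_nonneg_eq_0_iff_AE[symmetric]) auto
      then show ?thesis by eventually_elim auto
    next
      case False
      with \<open>A = 0 \<or> B = 0\<close> have "AE x in N. w x = 0"
        using int_w w0 unfolding B_def by (subst integral_nonneg_eq_0_iff_AE[symmetric]) auto
      then show ?thesis by eventually_elim auto
    qed
    then have "(\<integral>x. g x * w x \<partial>N) = 0" by (rule integral_eq_zero_AE)
    then show ?thesis unfolding A_def B_def by simp
  next
    case False
    then have "A > 0" "B > 0" using \<open>A \<ge> 0\<close> \<open>B \<ge> 0\<close> by auto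
    define C where "C = A powr (1/r) * B powr (1 - 1/r)"
    have "(\<integral>x. g x * w x \<partial>N) \<le>
        (\<integral>x. C * ((1/r) * (g x powr r * w x / A) + (1 - 1/r) * (w x / B)) \<partial>N)"
      unfolding C_def using int_gw_r int_w int_gw \<open>A > 0\<close> \<open>B > 0\<close> g0 w0 r
      by (intro integral_mono Young_inequality_weighted) auto
    also have "\<dots> = C * ((1/r) * (A / A) + (1 - 1/r) * (B / B))"
      using int_gw_r int_w unfolding A_def B_def by simp
    also have "\<dots> = C" using \<open>A > 0\<close> \<open>B > 0\<close> by (simp add: field_simps)
    finally show ?thesis unfolding C_def A_def B_def .
  qed
qed

lemma prod_powr_le_mean_powr:
  fixes g :: "nat \<Rightarrow> real"
  assumes "J \<ge> 1" and "\<And>j. g j \<ge> 0"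
  shows "(\<Prod>j<J. g j powr (c / J)) \<le> (\<Sum>j<J. g j powr c) / J"
proof -
  have "(\<Prod>j<J. g j powr c) powr (1 / card {..<J}) \<le> (\<Sum>j<J. g j powr c / card {..<J})"
    using assms by (intro arith_geom_mean) (auto simp: lessThan_empty_iff)
  then show ?thesis by (simp add: prod_powr_distrib powr_powr sum_divide_distrib)
qed

lemma (in finite_measure) integrable_of_integrable_powr:
  fixes f :: "'a \<Rightarrow> real"
  assumes [measurable]: "f \<in> borel_measurable M"
    and "integrable M (\<lambda>x. \<bar>f x\<bar> powr r)" and "r \<ge> 1"
  shows "integrable M f"
proof (rule Bochner_Integration.integrable_bound)
  show "integrable M (\<lambda>x. 1 + \<bar>f x\<bar> powr r)" using assms(2) by auto
  show "AE x in M. norm (f x) \<le> norm (1 + \<bar>f x\<bar> powr r)"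
  proof (intro AE_I2)
    fix x
    have "\<bar>f x\<bar> \<le> 1 + \<bar>f x\<bar> powr r"
    proof (cases "\<bar>f x\<bar> \<le> 1")
      case False
      have "\<bar>f x\<bar> powr 1 \<le> \<bar>f x\<bar> powr r" by (rule powr_mono) (use assms(3) False in auto)
      then show ?thesis using False by simp
    qed (simp add: add_increasing2)
    then show "norm (f x) \<le> norm (1 + \<bar>f x\<bar> powr r)" by simp
  qed
qed simp

lemma (in finite_measure) prod_moment_le:
  fixes h :: "nat \<Rightarrow> 'a \<Rightarrow> real"
  assumes J: "J \<ge> 1"
    and hm: "\<And>j. j < J \<Longrightarrow> h j \<in> borel_measurable M"
    and hi: "\<And>j. j < J \<Longrightarrow> integrable M (\<lambda>x. \<bar>h j x\<bar> powr c)"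
    and hb: "\<And>j. j < J \<Longrightarrow> (\<integral>x. \<bar>h j x\<bar> powr c \<partial>M) \<le> V"
  shows "integrable M (\<lambda>x. \<bar>\<Prod>j<J. h j x\<bar> powr (c / J))"
    and "(\<integral>x. \<bar>\<Prod>j<J. h j x\<bar> powr (c / J) \<partial>M) \<le> V"
proof -
  have mean_int: "integrable M (\<lambda>x. (\<Sum>j<J. \<bar>h j x\<bar> powr c) / J)"
    using hi by (intro integrable_divide Bochner_Integration.integrable_sum) auto
  have pointwise: "\<bar>\<Prod>j<J. h j x\<bar> powr (c / J) \<le> (\<Sum>j<J. \<bar>h j x\<bar> powr c) / J" for x
    using prod_powr_le_mean_powr[OF J, of "\<lambda>j. \<bar>h j x\<bar>"]
    by (simp add: abs_prod prod_powr_distrib)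
  have "(\<lambda>x. \<Prod>j<J. h j x) \<in> borel_measurable M" using hm by (intro borel_measurable_prod) auto
  then show int: "integrable M (\<lambda>x. \<bar>\<Prod>j<J. h j x\<bar> powr (c / J))"
    by (intro Bochner_Integration.integrable_bound[OF mean_int])
      (auto intro!: AE_I2 order_trans[OF _ pointwise] simp: sum_nonneg)
  have "(\<integral>x. \<bar>\<Prod>j<J. h j x\<bar> powr (c / J) \<partial>M) \<le> (\<integral>x. (\<Sum>j<J. \<bar>h j x\<bar> powr c) / J \<partial>M)"
    by (intro integral_mono int mean_int pointwise)
  also have "\<dots> = (\<Sum>j<J. (\<integral>x. \<bar>h j x\<bar> powr c \<partial>M)) / J"
    using hi by simp
  also have "\<dots> \<le> (\<Sum>j<J. V) / J"
    using hb by (intro divide_right_mono sum_mono) auto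
  also have "\<dots> = V" using J by simp
  finally show "(\<integral>x. \<bar>\<Prod>j<J. h j x\<bar> powr (c / J) \<partial>M) \<le> V" .
qed

section \<open>From a setwise bound to a moment bound\<close>

definition add_measure :: "'a measure \<Rightarrow> 'a measure \<Rightarrow> 'a measure" where
  "add_measure P Q = measure_of (space P) (sets P) (\<lambda>A. emeasure P A + emeasure Q A)"

lemma
  assumes "sets Q = sets P"
  shows space_add_measure [simp]: "space (add_measure P Q) = space P"
    and sets_add_measure [simp]: "sets (add_measure P Q) = sets P"
    and emeasure_add_measure:
      "A \<in> sets P \<Longrightarrow> emeasure (add_measure P Q) A = emeasure P A + emeasure Q A"
proof -
  show "space (add_measure P Q) = space P" by (simp add: add_measure_def)
  show "sets (add_measure P Q) = sets P" by (simp add: add_measure_def sets.space_closed)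
  have "countably_additive (sets P) (\<lambda>A. emeasure P A + emeasure Q A)"
    unfolding countably_additive_def
  proof (intro allI impI)
    fix A :: "nat \<Rightarrow> _" assume "range A \<subseteq> sets P" "disjoint_family A"
    then show "(\<Sum>i. emeasure P (A i) + emeasure Q (A i)) = emeasure P (\<Union>i. A i) + emeasure Q (\<Union>i. A i)"
      using assms by (simp add: suminf_add[symmetric] suminf_emeasure)
  qed
  then show "A \<in> sets P \<Longrightarrow> emeasure (add_measure P Q) A = emeasure P A + emeasure Q A"
    unfolding add_measure_def
    by (intro emeasure_measure_of_sigma sets.sigma_algebra_axioms) (auto simp: positive_def)
qed

lemma
  assumes "finite_measure P" "finite_measure Q" "sets Q = sets P"
  shows finite_measure_add_measure: "finite_measure (add_measure P Q)"
    and measure_add_measure: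
      "A \<in> sets P \<Longrightarrow> measure (add_measure P Q) A = measure P A + measure Q A"
proof -
  interpret P: finite_measure P by fact
  interpret Q: finite_measure Q by fact
  show "finite_measure (add_measure P Q)"
    using assms(3) sets_eq_imp_space_eq[OF assms(3)]
    by (intro finite_measureI) (simp add: emeasure_add_measure)
  assume "A \<in> sets P"
  then have "emeasure P A < top" "emeasure Q A < top"
    using assms(3) by (simp_all add: less_top[symmetric])
  then show "measure (add_measure P Q) A = measure P A + measure Q A"
    using \<open>A \<in> sets P\<close> assms(3) by (simp add: measure_def emeasure_add_measure enn2real_plus)
qed

lemma absolutely_continuous_add_measure:
  assumes "sets Q = sets P"
  shows "absolutely_continuous (add_measure P Q) P" "absolutely_continuous (add_measure P Q) Q"
  using assms by (auto simp: absolutely_continuous_def null_sets_def emeasure_add_measure)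

text \<open>Equal mass gives \<open>\<integral> |p - q| \<le> 2 b\<close>; then apply Hoelder's inequality with weight \<open>|p - q|\<close>.\<close>
lemma abs_integral_density_diff_le:
  fixes p q f :: "'a \<Rightarrow> real"
  assumes [measurable]: "p \<in> borel_measurable N" "q \<in> borel_measurable N" "f \<in> borel_measurable N"
    and p0: "\<And>x. p x \<ge> 0" and q0: "\<And>x. q x \<ge> 0"
    and int_p: "integrable N p" and int_q: "integrable N q"
    and mass: "(\<integral>x. p x \<partial>N) = (\<integral>x. q x \<partial>N)"
    and int_pf: "integrable N (\<lambda>x. p x * f x)" and int_qf: "integrable N (\<lambda>x. q x * f x)"
    and int_pfr: "integrable N (\<lambda>x. p x * \<bar>f x\<bar> powr r)"
    and int_qfr: "integrable N (\<lambda>x. q x * \<bar>f x\<bar> powr r)"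
    and mom_p: "(\<integral>x. p x * \<bar>f x\<bar> powr r \<partial>N) \<le> V"
    and mom_q: "(\<integral>x. q x * \<bar>f x\<bar> powr r \<partial>N) \<le> V"
    and setwise: "\<And>E. E \<in> sets N \<Longrightarrow> (\<integral>x. indicator E x * (p x - q x) \<partial>N) \<le> b"
    and r: "r > 1"
  shows "\<bar>(\<integral>x. p x * f x \<partial>N) - (\<integral>x. q x * f x \<partial>N)\<bar> \<le> 2 * V powr (1/r) * b powr (1 - 1/r)"
proof -
  define w where "w x = \<bar>p x - q x\<bar>" for x
  define E where "E = {x \<in> space N. q x < p x}"
  have [measurable]: "E \<in> sets N" "w \<in> borel_measurable N" unfolding E_def w_def by measurable
  have w_nonneg: "w x \<ge> 0" for x by (simp add: w_def)
  have int_Epq: "integrable N (\<lambda>x. indicator E x * (p x - q x))"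
    using integrable_real_mult_indicator[of E N "\<lambda>x. p x - q x"] int_p int_q by (simp add: mult.commute)
  have w_eq: "w x = 2 * (indicator E x * (p x - q x)) - (p x - q x)" if "x \<in> space N" for x
    using that unfolding w_def E_def by (auto simp: indicator_def)
  have int_w: "integrable N w"
    using int_Epq int_p int_q by (subst Bochner_Integration.integrable_cong[OF refl w_eq]) auto
  have "(\<integral>x. w x \<partial>N) = 2 * (\<integral>x. indicator E x * (p x - q x) \<partial>N)"
    using int_Epq int_p int_q mass by (subst Bochner_Integration.integral_cong[OF refl w_eq]) auto
  also have "\<dots> \<le> 2 * b" using setwise[of E] by simp
  finally have w_le: "(\<integral>x. w x \<partial>N) \<le> 2 * b" .
  have "0 \<le> b" using setwise[of "{}"] by simp
  have "0 \<le> (\<integral>x. p x * \<bar>f x\<bar> powr r \<partial>N)" using p0 by (intro integral_nonneg_AE) auto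
  then have "0 \<le> V" using mom_p by linarith
  have w_le_sum: "c * w x \<le> p x * c + q x * c" if "c \<ge> 0" for c x
    using mult_left_mono[OF _ that, of "w x" "p x + q x"] p0[of x] q0[of x]
    by (auto simp: w_def algebra_simps)
  have int_fw_r: "integrable N (\<lambda>x. \<bar>f x\<bar> powr r * w x)"
    by (rule Bochner_Integration.integrable_bound[OF Bochner_Integration.integrable_add[OF int_pfr int_qfr]])
      (auto simp: w_def intro!: AE_I2 order_trans[OF w_le_sum[unfolded w_def] abs_ge_self])
  have fw_le: "\<bar>f x\<bar> * w x \<le> \<bar>p x * f x\<bar> + \<bar>q x * f x\<bar>" for x
    using w_le_sum[of "\<bar>f x\<bar>" x] p0[of x] q0[of x] by (simp add: abs_mult)
  have int_fw: "integrable N (\<lambda>x. \<bar>f x\<bar> * w x)"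
    by (rule Bochner_Integration.integrable_bound[OF Bochner_Integration.integrable_add[OF
          integrable_abs[OF int_pf] integrable_abs[OF int_qf]]])
      (use fw_le in \<open>auto simp: w_def intro!: AE_I2\<close>)
  have "\<bar>(\<integral>x. p x * f x \<partial>N) - (\<integral>x. q x * f x \<partial>N)\<bar> = \<bar>\<integral>x. (p x - q x) * f x \<partial>N\<bar>"
    using int_pf int_qf by (simp add: left_diff_distrib)
  also have "\<dots> \<le> (\<integral>x. \<bar>f x\<bar> * w x \<partial>N)"
    using integral_abs_bound[of N "\<lambda>x. (p x - q x) * f x"] by (simp add: w_def abs_mult mult.commute)
  also have "\<dots> \<le> (\<integral>x. \<bar>f x\<bar> powr r * w x \<partial>N) powr (1/r) * (\<integral>x. w x \<partial>N) powr (1 - 1/r)"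
    using int_fw_r int_fw int_w r by (intro Holder_inequality_weighted) (auto simp: w_nonneg)
  also have "\<dots> \<le> (2 * V) powr (1/r) * (2 * b) powr (1 - 1/r)"
  proof (intro mult_mono powr_mono2)
    have "(\<integral>x. \<bar>f x\<bar> powr r * w x \<partial>N) \<le> (\<integral>x. p x * \<bar>f x\<bar> powr r + q x * \<bar>f x\<bar> powr r \<partial>N)"
      using int_fw_r int_pfr int_qfr by (intro integral_mono w_le_sum) auto
    also have "\<dots> \<le> 2 * V" using int_pfr int_qfr mom_p mom_q by simp
    finally show "(\<integral>x. \<bar>f x\<bar> powr r * w x \<partial>N) \<le> 2 * V" .
  qed (use w_le r in \<open>auto intro!: integral_nonneg_AE simp: w_def\<close>)
  also have "\<dots> = 2 * V powr (1/r) * b powr (1 - 1/r)"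
    using \<open>0 \<le> V\<close> \<open>0 \<le> b\<close> by (simp add: powr_mult powr_add[symmetric])
  finally show ?thesis .
qed

lemma abs_integral_diff_le_setwise:
  fixes f :: "'a \<Rightarrow> real"
  assumes "prob_space P" "prob_space Q" and sets_eq: "sets Q = sets P"
    and setwise: "\<And>C. C \<in> sets P \<Longrightarrow> measure P C - measure Q C \<le> b"
    and f_meas [measurable]: "f \<in> borel_measurable P"
    and int_P: "integrable P (\<lambda>x. \<bar>f x\<bar> powr r)" and int_Q: "integrable Q (\<lambda>x. \<bar>f x\<bar> powr r)"
    and mom_P: "(\<integral>x. \<bar>f x\<bar> powr r \<partial>P) \<le> V" and mom_Q: "(\<integral>x. \<bar>f x\<bar> powr r \<partial>Q) \<le> V"
    and r: "r > 1"
  shows "\<bar>(\<integral>x. f x \<partial>P) - (\<integral>x. f x \<partial>Q)\<bar> \<le> 2 * V powr (1/r) * b powr (1 - 1/r)"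
proof -
  interpret P: prob_space P by fact
  interpret Q: prob_space Q by fact
  define N where "N = add_measure P Q"
  interpret N: finite_measure N
    unfolding N_def using sets_eq P.finite_measure_axioms Q.finite_measure_axioms
    by (rule finite_measure_add_measure[rotated 2])
  have sets_N: "sets P = sets N" "sets Q = sets N" using sets_eq by (simp_all add: N_def)
  have meas_N: "measurable N = measurable P" by (intro ext measurable_cong_sets) (simp_all add: sets_N)
  define p where "p x = enn2real (RN_deriv N P x)" for x
  define q where "q x = enn2real (RN_deriv N Q x)" for x
  have ac: "absolutely_continuous N P" "absolutely_continuous N Q"
    unfolding N_def using absolutely_continuous_add_measure[OF sets_eq] by auto
  have RN_P: "integrable P g \<longleftrightarrow> integrable N (\<lambda>x. p x * g x)"
    "(\<integral>x. g x \<partial>P) = (\<integral>x. p x * g x \<partial>N)" if "g \<in> borel_measurable P" for g :: "'a \<Rightarrow> real"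
    using N.RN_deriv_integrable[OF P.sigma_finite_measure_axioms ac(1) sets_N(1)]
      N.RN_deriv_integral[OF P.sigma_finite_measure_axioms ac(1) sets_N(1)] that
    unfolding p_def meas_N by simp_all
  have RN_Q: "integrable Q g \<longleftrightarrow> integrable N (\<lambda>x. q x * g x)"
    "(\<integral>x. g x \<partial>Q) = (\<integral>x. q x * g x \<partial>N)" if "g \<in> borel_measurable P" for g :: "'a \<Rightarrow> real"
    using N.RN_deriv_integrable[OF Q.sigma_finite_measure_axioms ac(2) sets_N(2)]
      N.RN_deriv_integral[OF Q.sigma_finite_measure_axioms ac(2) sets_N(2)] that
    unfolding q_def meas_N by simp_all
  have f_meas_Q: "f \<in> borel_measurable Q"
    using f_meas by (simp add: measurable_cong_sets[OF sets_eq refl])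
  have int_f: "integrable P f" "integrable Q f"
    using P.integrable_of_integrable_powr[OF f_meas int_P] Q.integrable_of_integrable_powr[OF f_meas_Q int_Q] r
    by simp_all
  show ?thesis
    unfolding RN_P(2)[OF f_meas] RN_Q(2)[OF f_meas]
  proof (rule abs_integral_density_diff_le[where V=V and b=b and r=r])
    show "p \<in> borel_measurable N" "q \<in> borel_measurable N"
      unfolding p_def q_def by measurable
    show "f \<in> borel_measurable N" using f_meas by (simp add: meas_N)
    show "\<And>x. 0 \<le> p x" "\<And>x. 0 \<le> q x" by (simp_all add: p_def q_def)
    show "integrable N p" "integrable N q" "(\<integral>x. p x \<partial>N) = (\<integral>x. q x \<partial>N)"
      using RN_P[of "\<lambda>_. 1"] RN_Q[of "\<lambda>_. 1"] P.prob_space Q.prob_space by auto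
    show "integrable N (\<lambda>x. p x * f x)" "integrable N (\<lambda>x. q x * f x)"
      using RN_P(1)[OF f_meas] RN_Q(1)[OF f_meas] int_f by auto
    show "integrable N (\<lambda>x. p x * \<bar>f x\<bar> powr r)" "integrable N (\<lambda>x. q x * \<bar>f x\<bar> powr r)"
      "(\<integral>x. p x * \<bar>f x\<bar> powr r \<partial>N) \<le> V" "(\<integral>x. q x * \<bar>f x\<bar> powr r \<partial>N) \<le> V"
      using RN_P[of "\<lambda>x. \<bar>f x\<bar> powr r"] RN_Q[of "\<lambda>x. \<bar>f x\<bar> powr r"] int_P int_Q mom_P mom_Q
      by auto
    show "(\<integral>x. indicator E x * (p x - q x) \<partial>N) \<le> b" if "E \<in> sets N" for E
    proof -
      have "E \<in> sets P" "E \<in> sets Q" using that sets_N by auto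
      then have "measure P E = (\<integral>x. p x * indicator E x \<partial>N)" "measure Q E = (\<integral>x. q x * indicator E x \<partial>N)"
        using RN_P(2)[of "indicator E"] RN_Q(2)[of "indicator E"] by auto
      moreover have "integrable N (\<lambda>x. p x * indicator E x)" "integrable N (\<lambda>x. q x * indicator E x)"
        using RN_P(1)[of "indicator E"] RN_Q(1)[of "indicator E"] \<open>E \<in> sets P\<close> \<open>E \<in> sets Q\<close>
        by (auto simp: less_top[symmetric])
      ultimately show ?thesis
        using setwise[OF \<open>E \<in> sets P\<close>] by (simp add: algebra_simps)
    qed
  qed (rule r)
qed

section \<open>Approximation by a generating algebra\<close>

lemma (in finite_measure) approx_by_generating_algebra:
  assumes G: "algebra \<Omega> G" and sets_eq: "sets M = sigma_sets \<Omega> G"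
    and C: "C \<in> sets M" and \<epsilon>: "\<epsilon> > 0"
  shows "\<exists>R\<in>G. measure M (sym_diff C R) < \<epsilon>"
proof -
  interpret G: algebra \<Omega> G by fact
  have G_sets: "R \<in> sets M" if "R \<in> G" for R using that sets_eq by auto
  have "C \<in> sigma_sets \<Omega> G" using C sets_eq by simp
  then have "\<forall>\<epsilon>>0. \<exists>R\<in>G. measure M (sym_diff C R) < \<epsilon>"
  proof (induction rule: sigma_sets.induct)
    case (Basic a)
    then show ?case by force
  next
    case Empty
    then show ?case by force
  next
    case (Compl a)
    show ?case
    proof (intro allI impI)
      fix \<epsilon> :: real assume "\<epsilon> > 0"
      with Compl.IH obtain R where "R \<in> G" and R: "measure M (sym_diff a R) < \<epsilon>" by blast
      have "sym_diff a R \<in> sets M"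
        using Compl.hyps G_sets[OF \<open>R \<in> G\<close>] sets_eq by auto
      then have "measure M (sym_diff (\<Omega> - a) (\<Omega> - R)) \<le> measure M (sym_diff a R)"
        by (rule finite_measure_mono[rotated]) blast
      then show "\<exists>R\<in>G. measure M (sym_diff (\<Omega> - a) R) < \<epsilon>"
        using R G.compl_sets[OF \<open>R \<in> G\<close>] by (intro bexI[of _ "\<Omega> - R"]) auto
    qed
  next
    case (Union A)
    show ?case
    proof (intro allI impI)
      fix \<epsilon> :: real assume "\<epsilon> > 0"
      have A_sets: "A i \<in> sets M" for i using Union.hyps sets_eq by auto
      define B where "B n = (\<Union>i<n. A i)" for n
      have "(\<lambda>n. measure M (B n)) \<longlonglongrightarrow> measure M (\<Union>n. B n)"
        using A_sets unfolding B_def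
        by (intro finite_Lim_measure_incseq) (auto simp: incseq_def intro: less_le_trans)
      moreover have "(\<Union>n. B n) = (\<Union>i. A i)" unfolding B_def by auto
      ultimately have "eventually (\<lambda>n. measure M (\<Union>i. A i) - \<epsilon>/2 < measure M (B n)) sequentially"
        using \<open>\<epsilon> > 0\<close> by (intro order_tendstoD(1)) auto
      then obtain n where n: "measure M (\<Union>i. A i) - \<epsilon>/2 < measure M (B n)"
        by (auto simp: eventually_sequentially)
      have "\<epsilon> / (2 * (n + 1)) > 0" using \<open>\<epsilon> > 0\<close> by simp
      then have "\<forall>i. \<exists>R. R \<in> G \<and> measure M (sym_diff (A i) R) < \<epsilon> / (2 * (n + 1))"
        using Union.IH by blast
      then obtain R where R: "\<And>i. R i \<in> G" "\<And>i. measure M (sym_diff (A i) (R i)) < \<epsilon> / (2 * (n + 1))"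
        by metis
      have sym_diff_sets: "sym_diff (A i) (R i) \<in> sets M" for i using A_sets G_sets[OF R(1)] by auto
      have "sym_diff (\<Union>i. A i) (\<Union>i<n. R i) \<subseteq> ((\<Union>i. A i) - B n) \<union> (\<Union>i<n. sym_diff (A i) (R i))"
        unfolding B_def by auto
      then have "measure M (sym_diff (\<Union>i. A i) (\<Union>i<n. R i))
          \<le> measure M ((\<Union>i. A i) - B n) + measure M (\<Union>i<n. sym_diff (A i) (R i))"
        using A_sets sym_diff_sets unfolding B_def
        by (intro order_trans[OF finite_measure_mono measure_Un_le]) auto
      moreover have "measure M (\<Union>i<n. sym_diff (A i) (R i)) \<le> (\<Sum>i<n. measure M (sym_diff (A i) (R i)))"
        using sym_diff_sets by (intro measure_subadditive_finite) (auto simp: emeasure_finite)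
      moreover have "(\<Sum>i<n. measure M (sym_diff (A i) (R i))) \<le> (\<Sum>i<n. \<epsilon> / (2 * (n + 1)))"
        using R(2) by (intro sum_mono less_imp_le) auto
      moreover have "(\<Sum>i<n. \<epsilon> / (2 * (n + 1))) \<le> \<epsilon> / 2"
        using \<open>\<epsilon> > 0\<close> by (simp add: field_simps)
      moreover have "measure M ((\<Union>i. A i) - B n) = measure M (\<Union>i. A i) - measure M (B n)"
        using A_sets unfolding B_def by (intro finite_measure_Diff) auto
      ultimately have "measure M (sym_diff (\<Union>i. A i) (\<Union>i<n. R i)) < \<epsilon>" using n by linarith
      moreover have "(\<Union>i<n. R i) \<in> G" using R(1) by (intro G.finite_UN) auto
      ultimately show "\<exists>R\<in>G. measure M (sym_diff (\<Union>i. A i) R) < \<epsilon>" by blast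
    qed
  qed
  then show ?thesis using \<epsilon> by blast
qed

lemma measure_diff_le_on_generated_sets:
  assumes "finite_measure P" "finite_measure Q"
    and G: "algebra \<Omega> G" and sets_P: "sets P = sigma_sets \<Omega> G" and sets_Q: "sets Q = sigma_sets \<Omega> G"
    and bound: "\<And>R. R \<in> G \<Longrightarrow> measure P R - measure Q R \<le> b"
    and C: "C \<in> sets P"
  shows "measure P C - measure Q C \<le> b"
proof (rule field_le_epsilon)
  interpret P: finite_measure P by fact
  interpret Q: finite_measure Q by fact
  fix \<epsilon> :: real assume "\<epsilon> > 0"
  define N where "N = add_measure P Q"
  have sets_eq: "sets Q = sets P" using sets_P sets_Q by simp
  interpret N: finite_measure N
    unfolding N_def using P.finite_measure_axioms Q.finite_measure_axioms sets_eq
    by (rule finite_measure_add_measure)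
  have "C \<in> sets N" "sets N = sigma_sets \<Omega> G" using C sets_P sets_eq by (simp_all add: N_def)
  then obtain R where "R \<in> G" and R: "measure N (sym_diff C R) < \<epsilon>"
    using N.approx_by_generating_algebra[OF G _ _ \<open>\<epsilon> > 0\<close>] by blast
  have R_sets: "R \<in> sets P" using \<open>R \<in> G\<close> sets_P by auto
  have "measure P C \<le> measure P R + measure P (C - R)"
    using C R_sets by (intro order_trans[OF P.finite_measure_mono measure_Un_le]) auto
  moreover have "measure Q R \<le> measure Q C + measure Q (R - C)"
    using C R_sets sets_eq by (intro order_trans[OF Q.finite_measure_mono measure_Un_le]) auto
  moreover have "measure P (C - R) \<le> measure P (sym_diff C R)" "measure Q (R - C) \<le> measure Q (sym_diff C R)"
    using C R_sets sets_eq by (auto intro!: P.finite_measure_mono Q.finite_measure_mono)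
  moreover have "measure N (sym_diff C R) = measure P (sym_diff C R) + measure Q (sym_diff C R)"
    unfolding N_def using C R_sets sets_eq
    by (intro measure_add_measure P.finite_measure_axioms Q.finite_measure_axioms) auto
  ultimately show "measure P C - measure Q C \<le> b + \<epsilon>"
    using bound[OF \<open>R \<in> G\<close>] R by linarith
qed

section \<open>The \<open>\<beta>\<close>-coefficient and finite partitions\<close>

lemma (in finite_measure) partition_sum_measure_Int:
  assumes "is_fin_partition (space M) F \<P>" "F \<subseteq> sets M" "a \<in> sets M"
  shows "(\<Sum>b\<in>\<P>. measure M (a \<inter> b)) = measure M a"
proof -
  have \<P>: "finite \<P>" "\<P> \<subseteq> sets M" "disjoint \<P>" "\<Union>\<P> = space M"
    using assms(1,2) unfolding is_fin_partition_def by auto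
  have "measure M (\<Union>b\<in>\<P>. a \<inter> b) = (\<Sum>b\<in>\<P>. measure M (a \<inter> b))"
    using \<P> assms(3) by (intro finite_measure_finite_Union) (auto simp: disjoint_family_on_def disjoint_def)
  moreover have "(\<Union>b\<in>\<P>. a \<inter> b) = a"
    using \<P>(4) sets.sets_into_space[OF assms(3)] by auto
  ultimately show ?thesis by simp
qed

lemma (in prob_space) beta_partition_sum_le_2:
  assumes "is_fin_partition (space M) F1 \<P>1" "F1 \<subseteq> sets M"
    and "is_fin_partition (space M) F2 \<P>2" "F2 \<subseteq> sets M"
  shows "(\<Sum>a\<in>\<P>1. \<Sum>b\<in>\<P>2. \<bar>prob (a \<inter> b) - prob a * prob b\<bar>) \<le> 2"
proof -
  have \<P>1: "finite \<P>1" "\<P>1 \<subseteq> sets M" using assms(1,2) unfolding is_fin_partition_def by auto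
  have total: "(\<Sum>b\<in>\<P>. prob b) = 1" if "is_fin_partition (space M) F \<P>" "F \<subseteq> sets M" for F \<P>
  proof -
    have "(\<Sum>b\<in>\<P>. prob b) = (\<Sum>b\<in>\<P>. prob (space M \<inter> b))"
      using that(1) by (intro sum.cong refl arg_cong[where f=prob]) (auto simp: is_fin_partition_def)
    then show ?thesis using partition_sum_measure_Int[OF that sets.top] prob_space by simp
  qed
  have "(\<Sum>a\<in>\<P>1. \<Sum>b\<in>\<P>2. \<bar>prob (a \<inter> b) - prob a * prob b\<bar>)
      \<le> (\<Sum>a\<in>\<P>1. \<Sum>b\<in>\<P>2. prob (a \<inter> b) + prob a * prob b)"
    by (intro sum_mono abs_triangle_ineq4[THEN order_trans]) auto
  also have "\<dots> = (\<Sum>a\<in>\<P>1. prob a + prob a * (\<Sum>b\<in>\<P>2. prob b))"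
    using \<P>1 assms(3,4)
    by (intro sum.cong refl) (auto simp: sum.distrib sum_distrib_left partition_sum_measure_Int)
  also have "\<dots> = 2"
    using total[OF assms(1,2)] total[OF assms(3,4)] by (simp add: sum_distrib_left[symmetric])
  finally show ?thesis .
qed

lemma beta_coef_ge_partition_sum:
  assumes "prob_space M"
    and "is_fin_partition (space M) F1 \<P>1" "F1 \<subseteq> sets M"
    and "is_fin_partition (space M) F2 \<P>2" "F2 \<subseteq> sets M"
  shows "(1/2) * (\<Sum>a\<in>\<P>1. \<Sum>b\<in>\<P>2. \<bar>measure M (a \<inter> b) - measure M a * measure M b\<bar>)
           \<le> beta_coef M F1 F2"
  unfolding beta_coef_def
proof (rule cSUP_upper2[where x="(\<P>1, \<P>2)"])
  show "bdd_above ((\<lambda>AB. 1 / 2 * (\<Sum>a\<in>fst AB. \<Sum>b\<in>snd AB. \<bar>measure M (a \<inter> b) - measure M a * measure M b\<bar>)) `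
    {(A, B). is_fin_partition (space M) F1 A \<and> is_fin_partition (space M) F2 B})"
    using prob_space.beta_partition_sum_le_2[OF assms(1) _ assms(3) _ assms(5)]
    by (intro bdd_aboveI[of _ 1]) fastforce
qed (use assms in auto)

lemma beta_coef_nonneg:
  assumes "prob_space M"
    and "sigma_algebra (space M) F1" "F1 \<subseteq> sets M" "sigma_algebra (space M) F2" "F2 \<subseteq> sets M"
  shows "0 \<le> beta_coef M F1 F2"
proof -
  have "is_fin_partition (space M) F {space M}" if "sigma_algebra (space M) F" for F
  proof -
    interpret sigma_algebra "space M" F by fact
    show ?thesis by (auto simp: is_fin_partition_def disjoint_def)
  qed
  from beta_coef_ge_partition_sum[OF assms(1) this _ this] assms show ?thesis
    by (simp add: prob_space.prob_space)
qed

definition atom :: "'a set \<Rightarrow> 'a set set \<Rightarrow> 'a set set \<Rightarrow> 'a set" where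
  "atom \<Omega> \<A> T = {x \<in> \<Omega>. \<forall>a\<in>\<A>. x \<in> a \<longleftrightarrow> a \<in> T}"

lemma mem_atom_self: "x \<in> \<Omega> \<Longrightarrow> x \<in> atom \<Omega> \<A> {a \<in> \<A>. x \<in> a}"
  by (auto simp: atom_def)

lemma atom_index_eq: "T \<subseteq> \<A> \<Longrightarrow> x \<in> atom \<Omega> \<A> T \<Longrightarrow> T = {a \<in> \<A>. x \<in> a}"
  by (auto simp: atom_def)

lemma is_fin_partition_atoms:
  assumes "sigma_algebra \<Omega> F" "finite \<A>" "\<A> \<subseteq> F"
  shows "is_fin_partition \<Omega> F (atom \<Omega> \<A> ` Pow \<A>)"
proof -
  interpret sigma_algebra \<Omega> F by fact
  have atom_eq: "atom \<Omega> \<A> T = \<Omega> - (\<Union>a\<in>\<A> \<inter> T. \<Omega> - a) - (\<Union>a\<in>\<A> - T. a)" for T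
    unfolding atom_def by blast
  have "atom \<Omega> \<A> T \<in> F" for T
  proof -
    have "(\<Union>a\<in>\<A> \<inter> T. \<Omega> - a) \<in> F" "(\<Union>a\<in>\<A> - T. a) \<in> F"
      using assms(2,3) by (intro finite_UN; force)+
    then show ?thesis unfolding atom_eq by (intro Diff top)
  qed
  moreover have "disjoint (atom \<Omega> \<A> ` Pow \<A>)"
    unfolding disjoint_def
  proof (intro ballI impI)
    fix c d assume "c \<in> atom \<Omega> \<A> ` Pow \<A>" "d \<in> atom \<Omega> \<A> ` Pow \<A>" "c \<noteq> d"
    then obtain T T' where T: "T \<subseteq> \<A>" "T' \<subseteq> \<A>" and cd: "c = atom \<Omega> \<A> T" "d = atom \<Omega> \<A> T'"
      by blast
    show "c \<inter> d = {}"
    proof (rule ccontr)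
      assume "c \<inter> d \<noteq> {}"
      then obtain x where x: "x \<in> atom \<Omega> \<A> T" "x \<in> atom \<Omega> \<A> T'" using cd by auto
      have "T = T'" using atom_index_eq[OF T(1) x(1)] atom_index_eq[OF T(2) x(2)] by (rule trans[OF _ sym])
      then show False using \<open>c \<noteq> d\<close> cd by simp
    qed
  qed
  moreover have "\<Union> (atom \<Omega> \<A> ` Pow \<A>) = \<Omega>"
  proof
    show "\<Union> (atom \<Omega> \<A> ` Pow \<A>) \<subseteq> \<Omega>" by (auto simp: atom_def)
    show "\<Omega> \<subseteq> \<Union> (atom \<Omega> \<A> ` Pow \<A>)"
    proof
      fix x assume "x \<in> \<Omega>"
      then have "x \<in> atom \<Omega> \<A> {a \<in> \<A>. x \<in> a}" by (rule mem_atom_self)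
      moreover have "{a \<in> \<A>. x \<in> a} \<in> Pow \<A>" by auto
      ultimately show "x \<in> \<Union> (atom \<Omega> \<A> ` Pow \<A>)" by (rule UN_I[rotated])
    qed
  qed
  ultimately show ?thesis using assms(2) by (auto simp: is_fin_partition_def)
qed

section \<open>Diagonal and independent coupling of two sub-\<open>\<sigma>\<close>-algebras\<close>

lemma subalgebra_sigma:
  assumes "sigma_algebra (space M) F" "F \<subseteq> sets M"
  shows "subalgebra M (sigma (space M) F)" "sets (sigma (space M) F) = F"
proof -
  interpret sigma_algebra "space M" F by fact
  show "sets (sigma (space M) F) = F" by (simp add: sigma_sets_eq space_closed)
  then show "subalgebra M (sigma (space M) F)" using assms(2) by (simp add: subalgebra_def)
qed

lemma (in prob_space) distr_pair_snd:
  assumes "sigma_finite_measure N"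
  shows "distr (M \<Otimes>\<^sub>M N) N snd = N"
proof (rule measure_eqI)
  interpret N: sigma_finite_measure N by fact
  fix A assume A: "A \<in> sets (distr (M \<Otimes>\<^sub>M N) N snd)"
  then have "emeasure (distr (M \<Otimes>\<^sub>M N) N snd) A = emeasure (M \<Otimes>\<^sub>M N) (space M \<times> A)"
    by (auto simp: emeasure_distr space_pair_measure dest: sets.sets_into_space
        intro!: arg_cong2[where f=emeasure])
  with A show "emeasure (distr (M \<Otimes>\<^sub>M N) N snd) A = emeasure N A"
    by (simp add: N.emeasure_pair_measure_Times emeasure_space_1)
qed simp

definition rect_union :: "('a set \<times> 'b set) set \<Rightarrow> ('a \<times> 'b) set" where
  "rect_union S = (\<Union>ab\<in>S. fst ab \<times> snd ab)"

lemma rect_union_Un: "rect_union (S \<union> T) = rect_union S \<union> rect_union T"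
  by (simp add: rect_union_def)

lemma rect_union_Int:
  "rect_union S \<inter> rect_union T
     = rect_union ((\<lambda>(s, t). (fst s \<inter> fst t, snd s \<inter> snd t)) ` (S \<times> T))"
  unfolding rect_union_def by force

locale two_subalgebras = prob_space M for M :: "'w measure" +
  fixes F1 F2 :: "'w set set"
  assumes sigma_algebra_F1: "sigma_algebra (space M) F1" and F1_subset: "F1 \<subseteq> sets M"
    and sigma_algebra_F2: "sigma_algebra (space M) F2" and F2_subset: "F2 \<subseteq> sets M"
begin

definition "M1 = restr_to_subalg M (sigma (space M) F1)"
definition "M2 = restr_to_subalg M (sigma (space M) F2)"
definition "Qprod = M1 \<Otimes>\<^sub>M M2"
definition "Pdiag = distr M Qprod (\<lambda>\<omega>. (\<omega>, \<omega>))"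

lemma
  shows sets_M1 [simp]: "sets M1 = F1" and space_M1 [simp]: "space M1 = space M"
    and emeasure_M1: "A \<in> F1 \<Longrightarrow> emeasure M1 A = emeasure M A"
    and prob_space_M1: "prob_space M1"
    and sets_M2 [simp]: "sets M2 = F2" and space_M2 [simp]: "space M2 = space M"
    and emeasure_M2: "A \<in> F2 \<Longrightarrow> emeasure M2 A = emeasure M A"
    and prob_space_M2: "prob_space M2"
  using subalgebra_sigma[OF sigma_algebra_F1 F1_subset] subalgebra_sigma[OF sigma_algebra_F2 F2_subset]
    prob_space_axioms
  by (simp_all add: M1_def M2_def sets_restr_to_subalg space_restr_to_subalg
      emeasure_restr_to_subalg prob_space_restr_to_subalg)

lemma diag_measurable: "(\<lambda>\<omega>. (\<omega>, \<omega>)) \<in> measurable M Qprod"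
proof -
  have "(\<lambda>\<omega>. \<omega>) \<in> measurable M M1" "(\<lambda>\<omega>. \<omega>) \<in> measurable M M2"
    using F1_subset F2_subset sets.sets_into_space
    unfolding measurable_def by (auto simp: Int_absorb2)
  then show ?thesis unfolding Qprod_def by (rule measurable_Pair)
qed

lemma prob_space_Qprod: "prob_space Qprod"
  unfolding Qprod_def by (rule prob_space_pair[OF prob_space_M1 prob_space_M2])

lemma prob_space_Pdiag: "prob_space Pdiag"
  unfolding Pdiag_def by (rule prob_space_distr[OF diag_measurable])

lemma sets_Pdiag: "sets Pdiag = sets Qprod"
  by (simp add: Pdiag_def)

lemma space_Qprod: "space Qprod = space M \<times> space M"
  by (simp add: Qprod_def space_pair_measure)

lemma sets_Qprod: "sets Qprod = sigma_sets (space M \<times> space M) {a \<times> b | a b. a \<in> F1 \<and> b \<in> F2}"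
  by (simp add: Qprod_def sets_pair_measure)

lemma measure_Qprod_Times:
  assumes "a \<in> F1" "b \<in> F2"
  shows "measure Qprod (a \<times> b) = measure M a * measure M b"
proof -
  interpret M2: prob_space M2 by (rule prob_space_M2)
  have "emeasure Qprod (a \<times> b) = emeasure M1 a * emeasure M2 b"
    unfolding Qprod_def using assms by (intro M2.emeasure_pair_measure_Times) auto
  then show ?thesis using assms by (simp add: measure_def emeasure_M1 emeasure_M2 enn2real_mult)
qed

lemma measure_Pdiag_Times:
  assumes "a \<in> F1" "b \<in> F2"
  shows "measure Pdiag (a \<times> b) = measure M (a \<inter> b)"
proof -
  have "a \<times> b \<in> sets Qprod" unfolding Qprod_def using assms by auto
  moreover have "(\<lambda>\<omega>. (\<omega>, \<omega>)) -` (a \<times> b) \<inter> space M = a \<inter> b"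
    using assms F1_subset sets.sets_into_space by auto
  ultimately show ?thesis
    unfolding Pdiag_def by (simp add: measure_distr[OF diag_measurable])
qed

lemma integral_Pdiag:
  fixes g :: "'w \<times> 'w \<Rightarrow> real"
  assumes "g \<in> borel_measurable Qprod"
  shows "integrable Pdiag g \<longleftrightarrow> integrable M (\<lambda>x. g (x, x))"
    and "(\<integral>z. g z \<partial>Pdiag) = (\<integral>x. g (x, x) \<partial>M)"
  unfolding Pdiag_def
  using integrable_distr_eq[OF diag_measurable assms] integral_distr[OF diag_measurable assms]
  by auto

lemma integral_Qprod_snd:
  fixes g :: "'w \<Rightarrow> real"
  assumes g: "g \<in> borel_measurable M2"
  shows "integrable Qprod (\<lambda>z. g (snd z)) \<longleftrightarrow> integrable M g"
    and "(\<integral>z. g (snd z) \<partial>Qprod) = (\<integral>x. g x \<partial>M)"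
proof -
  interpret M1: prob_space M1 by (rule prob_space_M1)
  interpret M2: prob_space M2 by (rule prob_space_M2)
  have snd_distr: "distr Qprod M2 snd = M2"
    unfolding Qprod_def by (rule M1.distr_pair_snd) unfold_locales
  have snd_meas: "snd \<in> measurable Qprod M2" unfolding Qprod_def by simp
  have sub: "sets M2 \<subseteq> sets M" "space M2 = space M" "\<And>A. A \<in> sets M2 \<Longrightarrow> emeasure M2 A = emeasure M A"
    using F2_subset by (auto simp: emeasure_M2)
  show "integrable Qprod (\<lambda>z. g (snd z)) \<longleftrightarrow> integrable M g"
    using integrable_distr_eq[OF snd_meas g] integrable_subalgebra[OF g sub] snd_distr by simp
  show "(\<integral>z. g (snd z) \<partial>Qprod) = (\<integral>x. g x \<partial>M)"
    using integral_distr[OF snd_meas g] integral_subalgebra[OF g sub] snd_distr by simp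
qed

lemma distr_Qprod_pair:
  fixes U W :: "'w \<Rightarrow> 'b::topological_space"
  assumes U: "U \<in> measurable M1 borel" and W: "W \<in> measurable M2 borel"
  shows "distr Qprod (borel \<Otimes>\<^sub>M borel) (\<lambda>z. (U (fst z), W (snd z)))
           = distr M borel U \<Otimes>\<^sub>M distr M borel W"
proof -
  have distr_restr: "distr N borel V = distr M borel V"
    if "V \<in> measurable N borel" "sets N \<subseteq> sets M" "space N = space M"
       "\<And>A. A \<in> sets N \<Longrightarrow> emeasure N A = emeasure M A" for N and V :: "'w \<Rightarrow> 'b"
  proof (rule measure_eqI)
    fix A :: "'b set" assume "A \<in> sets (distr N borel V)"
    moreover have "V \<in> measurable M borel"
      using that(1-3) unfolding measurable_def by auto
    ultimately show "emeasure (distr N borel V) A = emeasure (distr M borel V) A"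
      using that measurable_sets[OF that(1)] by (simp add: emeasure_distr)
  qed simp
  have "sigma_finite_measure (distr M2 borel W)"
    using prob_space.prob_space_distr[OF prob_space_M2 W] by (simp add: prob_space_imp_sigma_finite)
  then have "distr M1 borel U \<Otimes>\<^sub>M distr M2 borel W
      = distr Qprod (borel \<Otimes>\<^sub>M borel) (\<lambda>(x, y). (U x, W y))"
    unfolding Qprod_def by (rule pair_measure_distr[OF U W])
  moreover have "distr M1 borel U = distr M borel U" "distr M2 borel W = distr M borel W"
    using U W F1_subset F2_subset by (auto intro!: distr_restr simp: emeasure_M1 emeasure_M2)
  ultimately show ?thesis by (simp add: case_prod_unfold)
qed

lemma integral_Qprod_eq_0:
  fixes f :: "'w \<times> 'w \<Rightarrow> real"
  assumes "integrable Qprod f" and "\<And>y. y \<in> space M \<Longrightarrow> (\<integral>x. f (x, y) \<partial>M1) = 0"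
  shows "(\<integral>z. f z \<partial>Qprod) = 0"
proof -
  interpret M1: prob_space M1 by (rule prob_space_M1)
  interpret M2: prob_space M2 by (rule prob_space_M2)
  interpret pair_sigma_finite M1 M2 ..
  have "(\<integral>z. f z \<partial>Qprod) = (\<integral>y. (\<integral>x. f (x, y) \<partial>M1) \<partial>M2)"
    using integral_snd[of "\<lambda>x y. f (x, y)"] assms(1) unfolding Qprod_def by (simp add: case_prod_unfold)
  also have "\<dots> = (\<integral>y. 0 \<partial>M2)"
    using assms(2) by (intro Bochner_Integration.integral_cong) auto
  also have "\<dots> = 0" by simp
  finally show ?thesis .
qed

definition "rect_algebra = {rect_union S | S. finite S \<and> S \<subseteq> F1 \<times> F2}"

lemma measure_cells_Union:
  assumes "prob_space L" "sets L = sets Qprod"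
    and \<P>1: "is_fin_partition (space M) F1 \<P>1" and \<P>2: "is_fin_partition (space M) F2 \<P>2"
    and S: "S \<subseteq> \<P>1 \<times> \<P>2"
  shows "measure L (rect_union S) = (\<Sum>ab\<in>S. measure L (fst ab \<times> snd ab))"
  unfolding rect_union_def
proof (rule finite_measure.finite_measure_finite_Union)
  show "finite_measure L" using assms(1) by (rule prob_space.finite_measure)
  show "finite S" using S \<P>1 \<P>2 by (auto simp: is_fin_partition_def intro: finite_subset)
  have cells: "fst ab \<in> \<P>1" "snd ab \<in> \<P>2" if "ab \<in> S" for ab using S that by auto
  show "(\<lambda>ab. fst ab \<times> snd ab) ` S \<subseteq> sets L"
  proof clarify
    fix a b assume "(a, b) \<in> S"
    then have "a \<in> F1" "b \<in> F2" using cells \<P>1 \<P>2 by (force simp: is_fin_partition_def)+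
    then show "fst (a, b) \<times> snd (a, b) \<in> sets L" using assms(2) by (simp add: Qprod_def pair_measureI)
  qed
  show "disjoint_family_on (\<lambda>ab. fst ab \<times> snd ab) S"
    unfolding disjoint_family_on_def
  proof (intro ballI impI)
    fix p q assume "p \<in> S" "q \<in> S" "p \<noteq> q"
    then have "fst p \<noteq> fst q \<or> snd p \<noteq> snd q" by (auto simp: prod_eq_iff)
    moreover have "disjoint \<P>1" "disjoint \<P>2" using \<P>1 \<P>2 by (simp_all add: is_fin_partition_def)
    ultimately have "fst p \<inter> fst q = {} \<or> snd p \<inter> snd q = {}"
      using cells[OF \<open>p \<in> S\<close>] cells[OF \<open>q \<in> S\<close>] by (metis disjointD)
    then show "(fst p \<times> snd p) \<inter> (fst q \<times> snd q) = {}" by auto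
  qed
qed

text \<open>On a union of cells of two finite partitions, \<open>Pdiag - Qprod\<close> is at most half the sum of
  \<open>|Pdiag - Qprod|\<close> over all cells, because \<open>Pdiag - Qprod\<close> sums to zero over all cells.\<close>
lemma measure_diff_cells_le_beta:
  assumes \<P>1: "is_fin_partition (space M) F1 \<P>1" and \<P>2: "is_fin_partition (space M) F2 \<P>2"
    and In: "In \<subseteq> \<P>1 \<times> \<P>2"
  shows "measure Pdiag (rect_union In) - measure Qprod (rect_union In) \<le> beta_coef M F1 F2"
proof -
  define d where "d ab = measure Pdiag (fst ab \<times> snd ab) - measure Qprod (fst ab \<times> snd ab)" for ab
  define Out where "Out = \<P>1 \<times> \<P>2 - In"
  have fin: "finite (\<P>1 \<times> \<P>2)" using \<P>1 \<P>2 by (simp add: is_fin_partition_def)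
  have diff_eq: "measure Pdiag (rect_union S) - measure Qprod (rect_union S) = (\<Sum>ab\<in>S. d ab)"
    if "S \<subseteq> \<P>1 \<times> \<P>2" for S
    using measure_cells_Union[OF prob_space_Pdiag sets_Pdiag \<P>1 \<P>2 that]
      measure_cells_Union[OF prob_space_Qprod refl \<P>1 \<P>2 that]
    by (simp add: d_def sum_subtractf)
  have "rect_union (\<P>1 \<times> \<P>2) = space Qprod"
    using \<P>1 \<P>2 unfolding rect_union_def space_Qprod is_fin_partition_def by fastforce
  then have "(\<Sum>ab\<in>\<P>1 \<times> \<P>2. d ab) = 0"
    using diff_eq[of "\<P>1 \<times> \<P>2"] prob_space.prob_space[OF prob_space_Pdiag]
      prob_space.prob_space[OF prob_space_Qprod] sets_eq_imp_space_eq[OF sets_Pdiag]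
    by simp
  moreover have split: "(\<Sum>ab\<in>\<P>1 \<times> \<P>2. g ab) = (\<Sum>ab\<in>In. g ab) + (\<Sum>ab\<in>Out. g ab)" for g :: "_ \<Rightarrow> real"
    unfolding Out_def using sum.subset_diff[OF In fin, of g] by (simp add: add.commute)
  ultimately have "2 * (measure Pdiag (rect_union In) - measure Qprod (rect_union In))
      = (\<Sum>ab\<in>In. d ab) - (\<Sum>ab\<in>Out. d ab)"
    using diff_eq[OF In] by simp
  also have "\<dots> \<le> (\<Sum>ab\<in>In. \<bar>d ab\<bar>) + (\<Sum>ab\<in>Out. \<bar>d ab\<bar>)"
  proof -
    have "(\<Sum>ab\<in>In. d ab) \<le> (\<Sum>ab\<in>In. \<bar>d ab\<bar>)" by (rule sum_mono) simp
    moreover have "(\<Sum>ab\<in>Out. - d ab) \<le> (\<Sum>ab\<in>Out. \<bar>d ab\<bar>)" by (rule sum_mono) simp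
    ultimately show ?thesis by (simp add: sum_negf)
  qed
  also have "\<dots> = (\<Sum>a\<in>\<P>1. \<Sum>b\<in>\<P>2. \<bar>measure M (a \<inter> b) - measure M a * measure M b\<bar>)"
    unfolding split[symmetric] sum.cartesian_product
    using \<P>1 \<P>2 subsetD[of \<P>1 F1] subsetD[of \<P>2 F2]
    by (intro sum.cong refl) (auto simp: d_def is_fin_partition_def measure_Pdiag_Times measure_Qprod_Times)
  also have "\<dots> \<le> 2 * beta_coef M F1 F2"
    using beta_coef_ge_partition_sum[OF prob_space_axioms \<P>1 F1_subset \<P>2 F2_subset] by simp
  finally show ?thesis by simp
qed

lemma rect_union_eq_cells:
  assumes S: "finite S" "S \<subseteq> F1 \<times> F2"
  defines "\<P>1 \<equiv> atom (space M) (fst ` S) ` Pow (fst ` S)"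
    and "\<P>2 \<equiv> atom (space M) (snd ` S) ` Pow (snd ` S)"
  shows "rect_union S = rect_union {ab \<in> \<P>1 \<times> \<P>2. fst ab \<times> snd ab \<subseteq> rect_union S}"
proof
  show "rect_union {ab \<in> \<P>1 \<times> \<P>2. fst ab \<times> snd ab \<subseteq> rect_union S} \<subseteq> rect_union S"
    by (auto simp: rect_union_def)
  show "rect_union S \<subseteq> rect_union {ab \<in> \<P>1 \<times> \<P>2. fst ab \<times> snd ab \<subseteq> rect_union S}"
  proof
    fix z assume "z \<in> rect_union S"
    then obtain a b where ab: "(a, b) \<in> S" "fst z \<in> a" "snd z \<in> b" by (auto simp: rect_union_def)
    then have "fst z \<in> space M" "snd z \<in> space M"
      using S F1_subset F2_subset sets.sets_into_space by blast+
    define c where "c = atom (space M) (fst ` S) {a' \<in> fst ` S. fst z \<in> a'}"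
    define d where "d = atom (space M) (snd ` S) {b' \<in> snd ` S. snd z \<in> b'}"
    have "c \<times> d \<subseteq> a \<times> b"
      using ab unfolding c_def d_def atom_def by force
    moreover have "a \<times> b \<subseteq> rect_union S" using ab(1) by (force simp: rect_union_def)
    moreover have "(c, d) \<in> \<P>1 \<times> \<P>2" unfolding c_def d_def \<P>1_def \<P>2_def by auto
    moreover have "z \<in> c \<times> d"
      using \<open>fst z \<in> space M\<close> \<open>snd z \<in> space M\<close> unfolding c_def d_def
      by (simp add: mem_Times_iff mem_atom_self)
    ultimately show "z \<in> rect_union {ab \<in> \<P>1 \<times> \<P>2. fst ab \<times> snd ab \<subseteq> rect_union S}"
      unfolding rect_union_def by force
  qed
qed

lemma measure_diff_rect_union_le_beta:
  assumes "finite S" "S \<subseteq> F1 \<times> F2"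
  shows "measure Pdiag (rect_union S) - measure Qprod (rect_union S) \<le> beta_coef M F1 F2"
proof -
  define C where "C = {ab \<in> atom (space M) (fst ` S) ` Pow (fst ` S) \<times> atom (space M) (snd ` S) ` Pow (snd ` S).
    fst ab \<times> snd ab \<subseteq> rect_union S}"
  have "is_fin_partition (space M) F1 (atom (space M) (fst ` S) ` Pow (fst ` S))"
    "is_fin_partition (space M) F2 (atom (space M) (snd ` S) ` Pow (snd ` S))"
    using assms sigma_algebra_F1 sigma_algebra_F2 by (auto intro!: is_fin_partition_atoms)
  then have "measure Pdiag (rect_union C) - measure Qprod (rect_union C) \<le> beta_coef M F1 F2"
    by (rule measure_diff_cells_le_beta) (auto simp: C_def)
  moreover have "rect_union S = rect_union C"
    unfolding C_def by (rule rect_union_eq_cells[OF assms])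
  ultimately show ?thesis by simp
qed

lemma rect_algebra_Int: "A \<in> rect_algebra \<Longrightarrow> B \<in> rect_algebra \<Longrightarrow> A \<inter> B \<in> rect_algebra"
proof -
  interpret F1: sigma_algebra "space M" F1 by (rule sigma_algebra_F1)
  interpret F2: sigma_algebra "space M" F2 by (rule sigma_algebra_F2)
  assume "A \<in> rect_algebra" "B \<in> rect_algebra"
  then obtain S T where "A = rect_union S" "finite S" "S \<subseteq> F1 \<times> F2"
    and "B = rect_union T" "finite T" "T \<subseteq> F1 \<times> F2"
    by (auto simp: rect_algebra_def)
  define W where "W = (\<lambda>(s, t). (fst s \<inter> fst t, snd s \<inter> snd t)) ` (S \<times> T)"
  have "A \<inter> B = rect_union W" unfolding W_def \<open>A = _\<close> \<open>B = _\<close> by (rule rect_union_Int)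
  moreover have "W \<subseteq> F1 \<times> F2"
  proof
    fix w assume "w \<in> W"
    then obtain s t where "s \<in> S" "t \<in> T" "w = (fst s \<inter> fst t, snd s \<inter> snd t)"
      unfolding W_def by auto
    moreover have "fst s \<in> F1" "snd s \<in> F2" "fst t \<in> F1" "snd t \<in> F2"
      using \<open>s \<in> S\<close> \<open>t \<in> T\<close> \<open>S \<subseteq> F1 \<times> F2\<close> \<open>T \<subseteq> F1 \<times> F2\<close> by auto
    ultimately show "w \<in> F1 \<times> F2" by auto
  qed
  moreover have "finite W" unfolding W_def using \<open>finite S\<close> \<open>finite T\<close> by simp
  ultimately show ?thesis unfolding rect_algebra_def by blast
qed

lemma algebra_rect_algebra: "algebra (space M \<times> space M) rect_algebra"
  unfolding algebra_iff_Un
proof (intro conjI ballI)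
  interpret F1: sigma_algebra "space M" F1 by (rule sigma_algebra_F1)
  interpret F2: sigma_algebra "space M" F2 by (rule sigma_algebra_F2)
  show "rect_algebra \<subseteq> Pow (space M \<times> space M)"
    using F1.sets_into_space F2.sets_into_space by (fastforce simp: rect_algebra_def rect_union_def)
  show "{} \<in> rect_algebra"
    by (auto simp: rect_algebra_def rect_union_def intro!: exI[of _ "{}"])
  show "A \<union> B \<in> rect_algebra" if A: "A \<in> rect_algebra" and B: "B \<in> rect_algebra" for A B
  proof -
    obtain S T where "A = rect_union S" "finite S" "S \<subseteq> F1 \<times> F2"
      and "B = rect_union T" "finite T" "T \<subseteq> F1 \<times> F2"
      using A B unfolding rect_algebra_def by blast
    then show ?thesis
      unfolding rect_algebra_def by (intro CollectI exI[of _ "S \<union> T"]) (auto simp: rect_union_Un)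
  qed
  show "space M \<times> space M - A \<in> rect_algebra" if A: "A \<in> rect_algebra" for A
  proof -
    obtain S where "A = rect_union S" "finite S" "S \<subseteq> F1 \<times> F2"
      using A by (auto simp: rect_algebra_def)
    have "space M \<times> space M - rect_union S \<in> rect_algebra"
      using \<open>finite S\<close> \<open>S \<subseteq> F1 \<times> F2\<close>
    proof (induction S rule: finite_induct)
      case empty
      have "space M \<times> space M - rect_union {} = rect_union {(space M, space M)}"
        by (simp add: rect_union_def)
      then show ?case
        unfolding rect_algebra_def by (intro CollectI exI[of _ "{(space M, space M)}"]) auto
    next
      case (insert ab S)
      obtain a b where ab: "ab = (a, b)" "a \<in> F1" "b \<in> F2" using insert.prems by auto
      have "space M \<times> space M - a \<times> b = rect_union {(space M - a, space M), (space M, space M - b)}"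
        by (auto simp: rect_union_def)
      moreover have "{(space M - a, space M), (space M, space M - b)} \<subseteq> F1 \<times> F2"
        using ab by auto
      ultimately have "space M \<times> space M - a \<times> b \<in> rect_algebra"
        unfolding rect_algebra_def by blast
      moreover have "space M \<times> space M - rect_union S \<in> rect_algebra"
        using insert.IH insert.prems by simp
      moreover have "space M \<times> space M - rect_union (insert ab S)
          = (space M \<times> space M - a \<times> b) \<inter> (space M \<times> space M - rect_union S)"
        by (auto simp: rect_union_def ab)
      ultimately show ?case by (simp add: rect_algebra_Int)
    qed
    then show ?thesis using \<open>A = rect_union S\<close> by simp
  qed
qed

lemma sets_Qprod_rect_algebra: "sets Qprod = sigma_sets (space M \<times> space M) rect_algebra"
proof -
  let ?\<Omega> = "space M \<times> space M" and ?R = "{a \<times> b | a b. a \<in> F1 \<and> b \<in> F2}"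
  have "?R \<subseteq> rect_algebra"
  proof
    fix r assume "r \<in> ?R"
    then obtain a b where "r = a \<times> b" "a \<in> F1" "b \<in> F2" by auto
    then show "r \<in> rect_algebra"
      unfolding rect_algebra_def by (intro CollectI exI[of _ "{(a, b)}"]) (auto simp: rect_union_def)
  qed
  moreover have "rect_algebra \<subseteq> sets Qprod"
  proof
    fix A assume "A \<in> rect_algebra"
    then obtain S where "A = rect_union S" "finite S" "S \<subseteq> F1 \<times> F2" by (auto simp: rect_algebra_def)
    moreover have "rect_union S \<in> sets Qprod" if "finite S" "S \<subseteq> F1 \<times> F2" for S
      unfolding rect_union_def Qprod_def using that by (intro sets.finite_UN) (auto intro!: pair_measureI)
    ultimately show "A \<in> sets Qprod" by simp
  qed
  ultimately show ?thesis
    unfolding sets_Qprod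
  proof (intro sigma_sets_eqI)
    show "a \<in> sigma_sets ?\<Omega> rect_algebra" if "a \<in> ?R" for a
      using that \<open>?R \<subseteq> rect_algebra\<close> by blast
    show "b \<in> sigma_sets ?\<Omega> ?R" if "b \<in> rect_algebra" for b
      using that \<open>rect_algebra \<subseteq> sets Qprod\<close> by (simp add: subset_iff sets_Qprod)
  qed
qed

theorem measure_diff_le_beta:
  assumes "C \<in> sets Qprod"
  shows "measure Pdiag C - measure Qprod C \<le> beta_coef M F1 F2"
proof (rule measure_diff_le_on_generated_sets[OF _ _ algebra_rect_algebra])
  show "finite_measure Pdiag" "finite_measure Qprod"
    using prob_space_Pdiag prob_space_Qprod by (auto intro: prob_space.finite_measure)
  show "sets Pdiag = sigma_sets (space M \<times> space M) rect_algebra"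
    "sets Qprod = sigma_sets (space M \<times> space M) rect_algebra"
    by (simp_all add: sets_Pdiag sets_Qprod_rect_algebra)
  show "measure Pdiag R - measure Qprod R \<le> beta_coef M F1 F2" if "R \<in> rect_algebra" for R
    using that by (auto simp: rect_algebra_def intro: measure_diff_rect_union_le_beta)
  show "C \<in> sets Pdiag" using assms by (simp add: sets_Pdiag)
qed

theorem abs_integral_diag_diff_le:
  fixes f :: "'w \<times> 'w \<Rightarrow> real"
  assumes f [measurable]: "f \<in> borel_measurable Qprod"
    and int_diag: "integrable M (\<lambda>x. \<bar>f (x, x)\<bar> powr r)" and int_Q: "integrable Qprod (\<lambda>z. \<bar>f z\<bar> powr r)"
    and mom_diag: "(\<integral>x. \<bar>f (x, x)\<bar> powr r \<partial>M) \<le> V" and mom_Q: "(\<integral>z. \<bar>f z\<bar> powr r \<partial>Qprod) \<le> V"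
    and r: "r > 1"
  shows "\<bar>(\<integral>x. f (x, x) \<partial>M) - (\<integral>z. f z \<partial>Qprod)\<bar>
           \<le> 2 * V powr (1/r) * beta_coef M F1 F2 powr (1 - 1/r)"
proof -
  have f_P: "f \<in> borel_measurable Pdiag" using f by (simp add: measurable_cong_sets[OF sets_Pdiag refl])
  have "(\<lambda>z. \<bar>f z\<bar> powr r) \<in> borel_measurable Qprod" by measurable
  note diag = integral_Pdiag[OF this] integral_Pdiag[OF f]
  show ?thesis
    unfolding diag(4)[symmetric]
  proof (rule abs_integral_diff_le_setwise[OF prob_space_Pdiag prob_space_Qprod sets_Pdiag[symmetric]
        measure_diff_le_beta f_P])
    show "C \<in> sets Pdiag \<Longrightarrow> C \<in> sets Qprod" for C by (simp add: sets_Pdiag)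
  qed (use diag int_diag int_Q mom_diag mom_Q r in auto)
qed

lemma abs_integral_prod_diag_diff_le:
  fixes h :: "nat \<Rightarrow> 'w \<times> 'w \<Rightarrow> real"
  assumes J: "J \<ge> 1" and \<delta>: "\<delta> > 0"
    and h_meas: "\<And>j. j < J \<Longrightarrow> h j \<in> borel_measurable Qprod"
    and int_diag: "\<And>j. j < J \<Longrightarrow> integrable M (\<lambda>x. \<bar>h j (x, x)\<bar> powr (J + \<delta>))"
    and int_Q: "\<And>j. j < J \<Longrightarrow> integrable Qprod (\<lambda>z. \<bar>h j z\<bar> powr (J + \<delta>))"
    and mom_diag: "\<And>j. j < J \<Longrightarrow> (\<integral>x. \<bar>h j (x, x)\<bar> powr (J + \<delta>) \<partial>M) \<le> V"
    and mom_Q: "\<And>j. j < J \<Longrightarrow> (\<integral>z. \<bar>h j z\<bar> powr (J + \<delta>) \<partial>Qprod) \<le> V"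
  shows "\<bar>(\<integral>x. (\<Prod>j<J. h j (x, x)) \<partial>M) - (\<integral>z. (\<Prod>j<J. h j z) \<partial>Qprod)\<bar>
           \<le> 2 * V powr (J / (J + \<delta>)) * beta_coef M F1 F2 powr (\<delta> / (J + \<delta>))"
proof -
  interpret Q: prob_space Qprod by (rule prob_space_Qprod)
  have diag_meas: "(\<lambda>x. h j (x, x)) \<in> borel_measurable M" if "j < J" for j
    using measurable_compose[OF diag_measurable h_meas[OF that]] by simp
  note prod_diag = prod_moment_le[OF J diag_meas int_diag mom_diag]
  note prod_Q = Q.prod_moment_le[OF J h_meas int_Q mom_Q]
  have r: "(J + \<delta>) / J > 1" using J \<delta> by (simp add: field_simps)
  have "1 / ((J + \<delta>) / J) = J / (J + \<delta>)" "1 - 1 / ((J + \<delta>) / J) = \<delta> / (J + \<delta>)"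
    using J \<delta> by (simp_all add: field_simps)
  then show ?thesis
    using abs_integral_diag_diff_le[where f="\<lambda>z. \<Prod>j<J. h j z" and r="(J + \<delta>) / J"]
      prod_diag prod_Q r h_meas
    by auto
qed

end

section \<open>Products of degenerate kernels\<close>

lemma sigma_algebra_gen_sigma: "sigma_algebra (space M) (gen_sigma M X I)"
  unfolding gen_sigma_def by (rule sigma_algebra_sigma_sets) auto

lemma gen_sigma_subset:
  "(\<And>i. i \<in> I \<Longrightarrow> X i \<in> borel_measurable M) \<Longrightarrow> gen_sigma M X I \<subseteq> sets M"
  unfolding gen_sigma_def by (intro sets.sigma_sets_subset) (auto intro: measurable_sets)

lemma measurable_gen_sigma:
  fixes X :: "'i \<Rightarrow> 'w \<Rightarrow> 'b::topological_space"
  assumes "sets N = gen_sigma M X I" "space N = space M" "i \<in> I"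
  shows "X i \<in> borel_measurable N"
proof (rule measurableI)
  fix A :: "'b set" assume "A \<in> sets borel"
  then have "X i -` A \<inter> space M \<in> gen_sigma M X I"
    unfolding gen_sigma_def using assms(3) by (intro sigma_sets.Basic) blast
  then show "X i -` A \<inter> space N \<in> sets N" using assms by simp
qed simp

lemma integral_powr_le_of_Lp_norm_le:
  assumes "Lp_norm N g p \<le> K" "p > 0"
  shows "(\<integral>x. \<bar>g x\<bar> powr p \<partial>N) \<le> K powr p"
proof -
  have "0 \<le> (\<integral>x. \<bar>g x\<bar> powr p \<partial>N)" by (intro integral_nonneg_AE AE_I2) simp
  then have "(\<integral>x. \<bar>g x\<bar> powr p \<partial>N) = Lp_norm N g p powr p"
    using assms(2) by (simp add: Lp_norm_def powr_powr)
  also have "\<dots> \<le> K powr p"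
    using assms by (intro powr_mono2) (auto simp: Lp_norm_def)
  finally show ?thesis .
qed

lemma Lp_norm_le_Hbound:
  assumes "finite I" "i \<in> I" "k \<in> I" "i \<noteq> k"
  shows "Lp_norm M (\<lambda>\<omega>. H (X i \<omega>) (X k \<omega>)) p \<le> Hbound M X H I p"
    and "Lp_norm (distr M borel (X i) \<Otimes>\<^sub>M distr M borel (X k)) (\<lambda>xy. H (fst xy) (snd xy)) p
           \<le> Hbound M X H I p"
proof -
  have "finite {(i, j). i \<in> I \<and> j \<in> I \<and> i \<noteq> j}"
    by (rule finite_subset[of _ "I \<times> I"]) (use assms(1) in auto)
  then have "max (Lp_norm M (\<lambda>\<omega>. H (X i \<omega>) (X k \<omega>)) p)
      (Lp_norm (distr M borel (X i) \<Otimes>\<^sub>M distr M borel (X k)) (\<lambda>xy. H (fst xy) (snd xy)) p)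
      \<le> Hbound M X H I p"
    unfolding Hbound_def using assms(2-4) by (intro cSUP_upper2[where x="(i, k)"] bdd_above_finite) auto
  then show "Lp_norm M (\<lambda>\<omega>. H (X i \<omega>) (X k \<omega>)) p \<le> Hbound M X H I p"
    "Lp_norm (distr M borel (X i) \<Otimes>\<^sub>M distr M borel (X k)) (\<lambda>xy. H (fst xy) (snd xy)) p
      \<le> Hbound M X H I p"
    by auto
qed

lemma Hbound_nonneg:
  assumes "finite I" "i \<in> I" "k \<in> I" "i \<noteq> k"
  shows "0 \<le> Hbound M X H I p"
  using Lp_norm_le_Hbound(1)[OF assms, where M=M and X=X and H=H and p=p] by (smt (verit) Lp_norm_def powr_ge_zero)

text \<open>A product of \<open>J\<close> kernel factors \<open>H(X\<^sub>a\<^sub>j, X\<^sub>b\<^sub>j)\<close> in which the index \<open>s\<close> occurs exactly once,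
  in factor \<open>j0\<close>, paired with \<open>t\<close>; \<open>I2\<close> contains every other index.\<close>
locale degenerate_kernel_product = prob_space M
  for M :: "'w measure" and X :: "'i \<Rightarrow> 'w \<Rightarrow> 'b::topological_space" and H :: "'b \<Rightarrow> 'b \<Rightarrow> real"
    and I :: "'i set" and J :: nat and \<delta> :: real and a b :: "nat \<Rightarrow> 'i"
    and j0 :: nat and s :: 'i and I2 :: "'i set" +
  assumes finite_I: "finite I"
    and X_meas: "\<And>i. i \<in> I \<Longrightarrow> X i \<in> borel_measurable M"
    and H_meas: "(\<lambda>xy. H (fst xy) (snd xy)) \<in> borel_measurable (borel \<Otimes>\<^sub>M borel)"
    and H_sym: "\<And>x y. H x y = H y x"
    and degenerate: "\<And>k x. k \<in> I \<Longrightarrow> integrable M (\<lambda>\<omega>. H (X k \<omega>) x) \<and> expectation (\<lambda>\<omega>. H (X k \<omega>) x) = 0"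
    and moments: "\<And>i k. i \<in> I \<Longrightarrow> k \<in> I \<Longrightarrow> i \<noteq> k \<Longrightarrow>
          integrable M (\<lambda>\<omega>. \<bar>H (X i \<omega>) (X k \<omega>)\<bar> powr (J + \<delta>)) \<and>
          integrable (distr M borel (X i) \<Otimes>\<^sub>M distr M borel (X k)) (\<lambda>xy. \<bar>H (fst xy) (snd xy)\<bar> powr (J + \<delta>))"
    and J: "J \<ge> 1" and \<delta>: "\<delta> > 0"
    and pairs: "\<And>j. j < J \<Longrightarrow> a j \<in> I \<and> b j \<in> I \<and> a j \<noteq> b j"
    and I2: "I2 \<subseteq> I" "s \<notin> I2"
    and j0: "j0 < J"
    and other_factors: "\<And>j. j < J \<Longrightarrow> j \<noteq> j0 \<Longrightarrow> a j \<in> I2 \<and> b j \<in> I2"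
    and free_factor: "(a j0 = s \<and> b j0 \<in> I2) \<or> (b j0 = s \<and> a j0 \<in> I2)"
begin

definition "t = (if a j0 = s then b j0 else a j0)"

lemma s_in_I: "s \<in> I" and t_in_I2: "t \<in> I2" and t_ne_s: "t \<noteq> s"
  using pairs[OF j0] free_factor I2 by (auto simp: t_def)

lemma factor_indices: "j < J \<Longrightarrow> a j \<in> insert s I2 \<and> b j \<in> insert s I2"
  using other_factors free_factor by (cases "j = j0") auto

lemma gen_sigma_subsets: "gen_sigma M X {s} \<subseteq> sets M" "gen_sigma M X I2 \<subseteq> sets M"
  using X_meas s_in_I I2 by (intro gen_sigma_subset; auto)+

sublocale two_subalgebras M "gen_sigma M X {s}" "gen_sigma M X I2"
  by (intro two_subalgebras.intro two_subalgebras_axioms.intro prob_space_axioms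
      sigma_algebra_gen_sigma gen_sigma_subsets)

lemma H_compose_meas:
  "f \<in> borel_measurable N \<Longrightarrow> g \<in> borel_measurable N \<Longrightarrow> (\<lambda>x. H (f x) (g x)) \<in> borel_measurable N"
  using measurable_compose[OF measurable_Pair H_meas] by simp

definition "X_coupled i z = X i (if i = s then fst z else snd z)"

definition "kernel_factor j z = H (X_coupled (a j) z) (X_coupled (b j) z)"

abbreviation "Hb \<equiv> Hbound M X H I (J + \<delta>)"

lemma X_s_meas: "X s \<in> borel_measurable M1"
  by (rule measurable_gen_sigma[of _ M X "{s}"]) auto

lemma X_I2_meas: "i \<in> I2 \<Longrightarrow> X i \<in> borel_measurable M2"
  by (rule measurable_gen_sigma[of _ M X I2]) auto

lemma X_coupled_meas:
  assumes "i \<in> insert s I2"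
  shows "X_coupled i \<in> borel_measurable Qprod"
proof (cases "i = s")
  case True
  then show ?thesis unfolding X_coupled_def Qprod_def using X_s_meas by simp
next
  case False
  then show ?thesis unfolding X_coupled_def Qprod_def using X_I2_meas assms by simp
qed

lemma kernel_factor_meas: "j < J \<Longrightarrow> kernel_factor j \<in> borel_measurable Qprod"
  unfolding kernel_factor_def using factor_indices by (intro H_compose_meas X_coupled_meas) auto

lemma kernel_factor_diag: "kernel_factor j (x, x) = H (X (a j) x) (X (b j) x)"
  by (simp add: kernel_factor_def X_coupled_def)

lemma kernel_factor_free: "kernel_factor j0 z = H (X s (fst z)) (X t (snd z))"
  using free_factor t_ne_s H_sym by (auto simp: kernel_factor_def X_coupled_def t_def)

lemma kernel_factor_other:
  "j < J \<Longrightarrow> j \<noteq> j0 \<Longrightarrow> kernel_factor j z = H (X (a j) (snd z)) (X (b j) (snd z))"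
  using other_factors I2(2) by (auto simp: kernel_factor_def X_coupled_def)

lemma moment_le_Hb:
  assumes "i \<in> I" "k \<in> I" "i \<noteq> k"
  shows "(\<integral>\<omega>. \<bar>H (X i \<omega>) (X k \<omega>)\<bar> powr (J + \<delta>) \<partial>M) \<le> Hb powr (J + \<delta>)"
    and "(\<integral>xy. \<bar>H (fst xy) (snd xy)\<bar> powr (J + \<delta>) \<partial>(distr M borel (X i) \<Otimes>\<^sub>M distr M borel (X k)))
           \<le> Hb powr (J + \<delta>)"
  using \<delta> by (intro integral_powr_le_of_Lp_norm_le Lp_norm_le_Hbound[OF finite_I assms]; simp)+

lemma kernel_factor_moment_diag:
  assumes "j < J"
  shows "integrable M (\<lambda>x. \<bar>kernel_factor j (x, x)\<bar> powr (J + \<delta>))"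
    and "(\<integral>x. \<bar>kernel_factor j (x, x)\<bar> powr (J + \<delta>) \<partial>M) \<le> Hb powr (J + \<delta>)"
  using moments pairs[OF assms] moment_le_Hb(1) by (auto simp: kernel_factor_diag)

lemma kernel_factor_moment_Qprod:
  assumes "j < J"
  shows "integrable Qprod (\<lambda>z. \<bar>kernel_factor j z\<bar> powr (J + \<delta>))"
    and "(\<integral>z. \<bar>kernel_factor j z\<bar> powr (J + \<delta>) \<partial>Qprod) \<le> Hb powr (J + \<delta>)"
proof -
  have Hc_meas: "(\<lambda>xy. \<bar>H (fst xy) (snd xy)\<bar> powr (J + \<delta>)) \<in> borel_measurable (borel \<Otimes>\<^sub>M borel)"
    using H_meas by measurable
  have "integrable Qprod (\<lambda>z. \<bar>kernel_factor j z\<bar> powr (J + \<delta>))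
      \<and> (\<integral>z. \<bar>kernel_factor j z\<bar> powr (J + \<delta>) \<partial>Qprod) \<le> Hb powr (J + \<delta>)"
  proof (cases "j = j0")
    case True
    let ?G = "\<lambda>z. (X s (fst z), X t (snd z))"
    have G_meas: "?G \<in> measurable Qprod (borel \<Otimes>\<^sub>M borel)"
      unfolding Qprod_def using X_s_meas X_I2_meas[OF t_in_I2] by measurable
    have "distr Qprod (borel \<Otimes>\<^sub>M borel) ?G = distr M borel (X s) \<Otimes>\<^sub>M distr M borel (X t)"
      by (rule distr_Qprod_pair[OF X_s_meas X_I2_meas[OF t_in_I2]])
    then show ?thesis
      using integrable_distr_eq[OF G_meas Hc_meas] integral_distr[OF G_meas Hc_meas]
        moments[OF s_in_I _ t_ne_s[symmetric]] moment_le_Hb(2)[OF s_in_I _ t_ne_s[symmetric]] t_in_I2 I2(1)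
      by (auto simp: True kernel_factor_free)
  next
    case False
    let ?g = "\<lambda>y. \<bar>H (X (a j) y) (X (b j) y)\<bar> powr (J + \<delta>)"
    have [measurable]: "(\<lambda>y. H (X (a j) y) (X (b j) y)) \<in> borel_measurable M2"
      using other_factors[OF assms False] by (intro H_compose_meas X_I2_meas) auto
    have "?g \<in> borel_measurable M2" by measurable
    then show ?thesis
      using integral_Qprod_snd[of ?g] moments pairs[OF assms] moment_le_Hb(1)
      by (auto simp: kernel_factor_other[OF assms False])
  qed
  then show "integrable Qprod (\<lambda>z. \<bar>kernel_factor j z\<bar> powr (J + \<delta>))"
    "(\<integral>z. \<bar>kernel_factor j z\<bar> powr (J + \<delta>) \<partial>Qprod) \<le> Hb powr (J + \<delta>)" by auto
qed

text \<open>Under the independent coupling the free factor integrates to zero in its first coordinate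
  (degeneracy of \<open>H\<close>), while the other factors do not depend on it.\<close>
lemma integral_Qprod_kernel_product: "(\<integral>z. (\<Prod>j<J. kernel_factor j z) \<partial>Qprod) = 0"
proof (rule integral_Qprod_eq_0)
  interpret Q: prob_space Qprod by (rule prob_space_Qprod)
  have "(\<lambda>z. \<Prod>j<J. kernel_factor j z) \<in> borel_measurable Qprod"
    using kernel_factor_meas by (intro borel_measurable_prod) auto
  moreover have "integrable Qprod (\<lambda>z. \<bar>\<Prod>j<J. kernel_factor j z\<bar> powr ((J + \<delta>) / J))"
    using Q.prod_moment_le(1)[OF J kernel_factor_meas kernel_factor_moment_Qprod] by simp
  moreover have "(J + \<delta>) / J \<ge> 1" using J \<delta> by (simp add: field_simps)
  ultimately show "integrable Qprod (\<lambda>z. \<Prod>j<J. kernel_factor j z)"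
    by (rule Q.integrable_of_integrable_powr)
next
  fix y assume "y \<in> space M"
  define rest where "rest = (\<Prod>j\<in>{..<J} - {j0}. H (X (a j) y) (X (b j) y))"
  have "(\<Prod>j\<in>{..<J} - {j0}. kernel_factor j (x, y)) = rest" for x
    unfolding rest_def by (intro prod.cong refl) (auto simp: kernel_factor_other)
  then have "(\<Prod>j<J. kernel_factor j (x, y)) = H (X s x) (X t y) * rest" for x
    using j0 by (simp add: prod.remove kernel_factor_free)
  moreover have "(\<lambda>x. H (X s x) (X t y)) \<in> borel_measurable M1"
    using X_s_meas by (intro H_compose_meas) auto
  then have "(\<integral>x. H (X s x) (X t y) \<partial>M1) = (\<integral>x. H (X s x) (X t y) \<partial>M)"
    by (rule integral_subalgebra) (use gen_sigma_subsets in \<open>auto simp: emeasure_M1\<close>)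
  ultimately have "(\<integral>x. (\<Prod>j<J. kernel_factor j (x, y)) \<partial>M1) = (\<integral>x. H (X s x) (X t y) \<partial>M) * rest"
    by simp
  then show "(\<integral>x. (\<Prod>j<J. kernel_factor j (x, y)) \<partial>M1) = 0"
    using degenerate[OF s_in_I] by simp
qed

lemma Hb_nonneg: "0 \<le> Hb"
  using pairs[OF j0] Hbound_nonneg[OF finite_I, where i="a j0" and k="b j0"] by blast

theorem abs_expectation_kernel_product_le:
  "\<bar>expectation (\<lambda>\<omega>. \<Prod>j<J. H (X (a j) \<omega>) (X (b j) \<omega>))\<bar>
     \<le> 2 * Hb ^ J * beta_coef M (gen_sigma M X {s}) (gen_sigma M X I2) powr (\<delta> / (J + \<delta>))"
proof -
  have "(Hb powr (J + \<delta>)) powr (J / (J + \<delta>)) = Hb ^ J"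
    using Hb_nonneg \<delta> J by (cases "Hb = 0") (simp_all add: powr_powr powr_realpow)
  moreover have "\<bar>expectation (\<lambda>x. \<Prod>j<J. kernel_factor j (x, x)) - (\<integral>z. (\<Prod>j<J. kernel_factor j z) \<partial>Qprod)\<bar>
      \<le> 2 * (Hb powr (J + \<delta>)) powr (J / (J + \<delta>))
          * beta_coef M (gen_sigma M X {s}) (gen_sigma M X I2) powr (\<delta> / (J + \<delta>))"
    using kernel_factor_meas kernel_factor_moment_diag kernel_factor_moment_Qprod
    by (intro abs_integral_prod_diag_diff_le J \<delta>)
  ultimately show ?thesis
    by (simp add: integral_Qprod_kernel_product kernel_factor_diag)
qed

end

lemma degenerate_kernel_product_consecutive_pairs:
  fixes e :: "nat \<Rightarrow> 'i" and X :: "'i \<Rightarrow> 'w \<Rightarrow> 'b::topological_space"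
  assumes "prob_space M" "finite I" "\<And>i. i \<in> I \<Longrightarrow> X i \<in> borel_measurable M"
    and "(\<lambda>xy. H (fst xy) (snd xy)) \<in> borel_measurable (borel \<Otimes>\<^sub>M borel)" "\<And>x y. H x y = H y x"
    and "\<And>k x. k \<in> I \<Longrightarrow> integrable M (\<lambda>\<omega>. H (X k \<omega>) x) \<and> (\<integral>\<omega>. H (X k \<omega>) x \<partial>M) = 0"
    and "\<And>i k. i \<in> I \<Longrightarrow> k \<in> I \<Longrightarrow> i \<noteq> k \<Longrightarrow>
          integrable M (\<lambda>\<omega>. \<bar>H (X i \<omega>) (X k \<omega>)\<bar> powr (J + \<delta>)) \<and>
          integrable (distr M borel (X i) \<Otimes>\<^sub>M distr M borel (X k)) (\<lambda>xy. \<bar>H (fst xy) (snd xy)\<bar> powr (J + \<delta>))"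
    and "J \<ge> 1" "\<delta> > 0"
    and e_in: "\<And>q. q < 2 * J \<Longrightarrow> e q \<in> I" and e_ne: "\<And>j. j < J \<Longrightarrow> e (2 * j) \<noteq> e (2 * j + 1)"
    and p: "p < 2 * J" and e_ne_free: "\<And>q. q < 2 * J \<Longrightarrow> q \<noteq> p \<Longrightarrow> e q \<noteq> e p"
  shows "degenerate_kernel_product M X H I J \<delta> (\<lambda>j. e (2 * j)) (\<lambda>j. e (2 * j + 1)) (p div 2) (e p)
           (e ` ({..<2 * J} - {p}))"
proof (intro degenerate_kernel_product.intro degenerate_kernel_product_axioms.intro assms(1), goal_cases)
  case 9
  then show ?case using e_in e_ne by auto
next
  case 10
  show ?case using e_in by auto
next
  case 11
  show ?case
  proof
    assume "e p \<in> e ` ({..<2 * J} - {p})"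
    then obtain q where "q \<in> {..<2 * J} - {p}" "e p = e q" by (rule imageE)
    then show False using e_ne_free[of q] by simp
  qed
next
  case 12
  show ?case using p by simp
next
  case (13 j)
  then have "2 * j \<in> {..<2 * J} - {p}" "2 * j + 1 \<in> {..<2 * J} - {p}" by auto
  then show ?case by (intro conjI imageI)
next
  case 14
  have "2 * (p div 2) = p \<and> 2 * (p div 2) + 1 \<in> {..<2 * J} - {p}
      \<or> 2 * (p div 2) + 1 = p \<and> 2 * (p div 2) \<in> {..<2 * J} - {p}"
    using p by simp presburger
  then show ?case by auto
qed (use assms in auto)

theorem mainTheorem12:
  fixes M :: "'w measure"
    and I :: "'i set"
    and dd :: "'i \<Rightarrow> 'i \<Rightarrow> real"
    and X :: "'i \<Rightarrow> 'w \<Rightarrow> real ^ 'd"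
    and \<beta> :: "enat \<Rightarrow> enat \<Rightarrow> real \<Rightarrow> real"
    and H :: "real ^ 'd \<Rightarrow> real ^ 'd \<Rightarrow> real"
    and \<delta> m :: real
    and J :: nat
    and e :: "nat \<Rightarrow> 'i"
  assumes prob: "prob_space M"
    and finI: "finite I"
    and metric: "\<forall>i\<in>I. \<forall>j\<in>I. (dd i j = 0 \<longleftrightarrow> i = j) \<and> dd i j = dd j i \<and>
                   (\<forall>k\<in>I. dd i k \<le> dd i j + dd j k)"
    and Xmeas: "\<forall>i\<in>I. X i \<in> borel_measurable M"
    and assumption2: "\<forall>n1 n2 (r::real). r > 0 \<longrightarrow>
          (\<forall>I1 I2. I1 \<subseteq> I \<and> I2 \<subseteq> I \<and> enat (card I1) \<le> n1 \<and> enat (card I2) \<le> n2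
              \<and> (\<forall>i\<in>I1. \<forall>j\<in>I2. dd i j \<ge> r)
              \<longrightarrow> beta_coef M (gen_sigma M X I1) (gen_sigma M X I2) \<le> \<beta> n1 n2 r)"
    and Hmeas: "(\<lambda>xy. H (fst xy) (snd xy)) \<in> borel_measurable (borel \<Otimes>\<^sub>M borel)"
    and Hsym: "\<forall>x y. H x y = H y x"
    and degenerate: "\<forall>k\<in>I. \<forall>x. integrable M (\<lambda>\<omega>. H (X k \<omega>) x) \<and>
                                 prob_space.expectation M (\<lambda>\<omega>. H (X k \<omega>) x) = 0"
    and delta: "\<delta> > 0"
    and Hmoments: "\<forall>i\<in>I. \<forall>j\<in>I. i \<noteq> j \<longrightarrow>
          integrable M (\<lambda>\<omega>. \<bar>H (X i \<omega>) (X j \<omega>)\<bar> powr (real J + \<delta>)) \<and>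
          integrable (distr M borel (X i) \<Otimes>\<^sub>M distr M borel (X j))
                     (\<lambda>xy. \<bar>H (fst xy) (snd xy)\<bar> powr (real J + \<delta>))"
    and J: "J \<ge> 1"
    and e_in: "\<forall>p < 2 * J. e p \<in> I"
    and e_ne: "\<forall>j < J. e (2 * j) \<noteq> e (2 * j + 1)"
    and m_pos: "m > 0"
    and mfree: "\<exists>p < 2 * J. \<forall>q < 2 * J. q \<noteq> p \<longrightarrow> dd (e p) (e q) > m"
  shows "\<bar>prob_space.expectation M (\<lambda>\<omega>. \<Prod>j<J. H (X (e (2 * j)) \<omega>) (X (e (2 * j + 1)) \<omega>))\<bar>
         \<le> 2 * Hbound M X H I (real J + \<delta>) ^ J
             * \<beta> 1 (enat (2 * J - 1)) m powr (\<delta> / (real J + \<delta>))"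
proof -
  obtain p where p: "p < 2 * J" and far: "\<And>q. q < 2 * J \<Longrightarrow> q \<noteq> p \<Longrightarrow> dd (e p) (e q) > m"
    using mfree by blast
  define I2 where "I2 = e ` ({..<2 * J} - {p})"
  have "e q \<noteq> e p" if "q < 2 * J" "q \<noteq> p" for q
    using far[OF that] metric e_in p that m_pos by fastforce
  then interpret degenerate_kernel_product M X H I J \<delta> "\<lambda>j. e (2 * j)" "\<lambda>j. e (2 * j + 1)" "p div 2" "e p" I2
    unfolding I2_def using prob finI Xmeas Hmeas Hsym degenerate delta Hmoments J e_in e_ne p
    by (intro degenerate_kernel_product_consecutive_pairs) auto
  have "card I2 \<le> 2 * J - 1"
    using card_image_le[of "{..<2 * J} - {p}" e] p by (simp add: I2_def)
  moreover have "{e p} \<subseteq> I" "I2 \<subseteq> I" "\<forall>i\<in>{e p}. \<forall>j\<in>I2. m \<le> dd i j"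
    using e_in p far by (auto simp: I2_def less_imp_le)
  moreover have "enat (card {e p}) \<le> 1" by (simp add: one_enat_def)
  ultimately have "beta_coef M (gen_sigma M X {e p}) (gen_sigma M X I2) \<le> \<beta> 1 (enat (2 * J - 1)) m"
    using assumption2 m_pos by (meson enat_ord_simps(1))
  then have "beta_coef M (gen_sigma M X {e p}) (gen_sigma M X I2) powr (\<delta> / (J + \<delta>))
      \<le> \<beta> 1 (enat (2 * J - 1)) m powr (\<delta> / (J + \<delta>))"
    using beta_coef_nonneg[OF prob sigma_algebra_F1 F1_subset sigma_algebra_F2 F2_subset] delta
    by (intro powr_mono2) auto
  with Hb_nonneg have "2 * Hb ^ J * beta_coef M (gen_sigma M X {e p}) (gen_sigma M X I2) powr (\<delta> / (J + \<delta>))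
      \<le> 2 * Hb ^ J * \<beta> 1 (enat (2 * J - 1)) m powr (\<delta> / (J + \<delta>))"
    by (intro mult_left_mono) auto
  then show ?thesis using abs_expectation_kernel_product_le by simp
qed

end
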